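(* There exists a parallelism of lines in the projective geometry $\mathrm{PG}(5,3)$; that is, the set of all lines of $\mathrm{PG}(5,3)$ can be partitioned into $121$ pairwise disjoint spreads, where each spread is a set of $91$ lines such that every point of $\mathrm{PG}(5,3)$ lies on exactly one line of the spread.
   Context: $\mathrm{PG}(5,3)$ is the projective geometry whose points are the $364$ one-dimensional subspaces of $\mathbb{F}_3^6$ and whose lines are the two-dimensional subspaces of $\mathbb{F}_3^6$ (each line contains $4$ points). A spread (1-spread) of $\mathrm{PG}(5,3)$ is a set of pairwise disjoint lines covering all points; two spreads are disjoint if they share no line, and a parallelism is a partition of the set of all lines into spreads. *)

theory Defs
  imports "HOL-Analysis.Analysis"
begin

definition pg_points :: "('a::field ^ 6) set set" where
  "pg_points = {P. vec.subspace P \<and> vec.dim P = 1}"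

definition pg_lines :: "('a::field ^ 6) set set" where
  "pg_lines = {L. vec.subspace L \<and> vec.dim L = 2}"

definition is_spread :: "('a::field ^ 6) set set \<Rightarrow> bool" where
  "is_spread S \<longleftrightarrow> S \<subseteq> pg_lines \<and> (\<forall>P\<in>pg_points. \<exists>!L. L \<in> S \<and> P \<subseteq> L)"

definition is_parallelism :: "('a::field ^ 6) set set set \<Rightarrow> bool" where
  "is_parallelism \<P> \<longleftrightarrow> (\<forall>S\<in>\<P>. is_spread S) \<and>
     (\<forall>L\<in>pg_lines. \<exists>!S. S \<in> \<P> \<and> L \<in> S)"

end

theory Submission
  imports Defs "HOL-Computational_Algebra.Primes"
begin

text \<open>
  The parallelism is cyclic. Let \<open>\<sigma>\<close> act on the first five coordinates as multiplication
  by \<open>x\<close> in \<open>GF(3)[x]/(x\<^sup>5 - x\<^sup>4 + 1)\<close> and fix \<open>e\<^sub>5\<close>. The polynomial is primitive,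
  so \<open>\<sigma>\<^sup>2\<close> generates a group \<open>G\<close> of 121 collineations whose point orbits are the
  hyperplane \<open>x\<^sub>5 = 0\<close>, the point \<open>\<langle>e\<^sub>5\<rangle>\<close> and two orbits of affine points. The spreads
  are the images \<open>\<sigma>\<^sup>2\<^sup>j S\<^sub>0\<close> (\<open>j < 121\<close>) of one explicit spread \<open>S\<^sub>0\<close>.

  Numbering the 364 points so that \<open>\<sigma>\<^sup>2\<close> acts by index arithmetic turns everything into
  finite checks. That \<open>S\<^sub>0\<close> is a spread is a check on its 91 lines. That every line lies
  in exactly one \<open>\<sigma>\<^sup>2\<^sup>j S\<^sub>0\<close> amounts to: for every point \<open>r\<close>, the lines through \<open>r\<close>
  of the 121 spreads cover each other point exactly once. By \<open>G\<close>-invariance it suffices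
  to check this for one representative \<open>r\<close> of each orbit, where a table naming, for
  every other point, the spread whose line through \<open>r\<close> contains it certifies
  disjointness, and counting gives the covering.
\<close>

lemma pg_pointE:
  assumes "P \<in> pg_points"
  obtains w :: "'a::field^6" where "w \<noteq> 0" "P = vec.span {w}"
proof -
  obtain B where B: "B \<subseteq> P" "vec.independent B" "P \<subseteq> vec.span B" "card B = vec.dim P"
    using vec.basis_exists by blast
  moreover obtain w where "B = {w}"
    using B(4) assms card_1_singletonE unfolding pg_points_def by auto
  moreover have "vec.subspace P"
    using assms unfolding pg_points_def by simp
  ultimately show ?thesis
    using that[of w] vec.dependent_zero[of B] vec.span_subspace[of B P] by auto
qed

lemma pg_lineE:
  assumes "L \<in> pg_lines"
  obtains u v :: "'a::field^6" where "vec.independent {u, v}" "u \<noteq> v" "L = vec.span {u, v}"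
proof -
  obtain B where B: "B \<subseteq> L" "vec.independent B" "L \<subseteq> vec.span B" "card B = vec.dim L"
    using vec.basis_exists by blast
  moreover obtain u v where "B = {u, v}" "u \<noteq> v"
    using B(4) assms unfolding pg_lines_def by (auto simp: card_2_iff)
  moreover have "vec.subspace L"
    using assms unfolding pg_lines_def by simp
  ultimately show ?thesis
    using that[of u v] vec.span_subspace[of B L] by auto
qed

lemma span_pair_in_pg_lines:
  assumes "vec.independent {u, v :: 'a::field^6}" "u \<noteq> v"
  shows "vec.span {u, v} \<in> pg_lines"
  using vec.dim_span_eq_card_independent[OF assms(1)] assms(2)
  by (simp add: pg_lines_def vec.subspace_span)

lemma pg_lines_subset_imp_eq:
  "L \<in> pg_lines \<Longrightarrow> L' \<in> pg_lines \<Longrightarrow> L \<subseteq> L' \<Longrightarrow> L = L'"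
  unfolding pg_lines_def by (simp add: vec.subspace_dim_equal)

lemma span_singleton_subset_iff: "vec.subspace L \<Longrightarrow> vec.span {w} \<subseteq> L \<longleftrightarrow> w \<in> L"
  using vec.span_minimal[of "{w}" L] vec.span_base[of w "{w}"] by auto

section \<open>The collineation \<open>\<sigma>\<close>\<close>

text \<open>Multiplication by \<open>x\<close> in \<open>GF(3)[x]/(x\<^sup>5 - x\<^sup>4 + 1)\<close> on the first five coordinates,
  in the basis \<open>1, x, \<dots>, x\<^sup>4\<close>, and the identity on the last coordinate.\<close>

definition singer :: "'a::field^6 \<Rightarrow> 'a^6" where
  "singer v = (\<chi> i. if i = 0 then - v $ 4 else if i = 1 then v $ 0 else if i = 2 then v $ 1
                   else if i = 3 then v $ 2 else if i = 4 then v $ 3 + v $ 4 else v $ 5)"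

lemma singer_pow_add: "(singer ^^ n) (x + y) = (singer ^^ n) x + (singer ^^ n) y"
  by (induction n) (simp_all add: singer_def vec_eq_iff)

lemma singer_pow_minus: "(singer ^^ n) (- x) = - (singer ^^ n) x"
  by (induction n) (simp_all add: singer_def vec_eq_iff)

lemma singer_pow_diff: "(singer ^^ n) (x - y) = (singer ^^ n) x - (singer ^^ n) y"
  using singer_pow_add[of n x "- y"] by (simp add: singer_pow_minus)

lemma singer_pow_zero: "(singer ^^ n) 0 = (0 :: 'a::field^6)"
  by (induction n) (simp_all add: singer_def vec_eq_iff)

lemma singer_pow_nth_5: "((singer ^^ n) x) $ 5 = x $ 5"
  by (induction n) (simp_all add: singer_def)

lemma exhaust_6: "(i :: 6) = 0 \<or> i = 1 \<or> i = 2 \<or> i = 3 \<or> i = 4 \<or> i = 5"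
proof (induct i)
  case (of_int z)
  then have "z = 0 \<or> z = 1 \<or> z = 2 \<or> z = 3 \<or> z = 4 \<or> z = 5"
    by fastforce
  then show ?case
    by auto
qed

lemma singer_pow_axis_5: "(singer ^^ n) (axis 5 1) = (axis 5 1 :: 'a::field^6)"
proof -
  have "singer (axis 5 1) = (axis 5 1 :: 'a^6)"
    unfolding vec_eq_iff
  proof
    fix i :: 6
    show "singer (axis 5 1) $ i = (axis 5 1 :: 'a^6) $ i"
      using exhaust_6[of i] by (elim disjE) (simp_all add: singer_def axis_def)
  qed
  then show ?thesis
    by (induction n) simp_all
qed

text \<open>For computation, a vector over a field with three elements is encoded as a list of six
  digits \<open>0, 1, 2\<close>, the digit \<open>2\<close> standing for \<open>-1\<close>.\<close>

definition coord_index :: "6 \<Rightarrow> nat" where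
  "coord_index i = (if i = 0 then 0 else if i = 1 then 1 else if i = 2 then 2
                    else if i = 3 then 3 else if i = 4 then 4 else 5)"

definition code_vec :: "nat list \<Rightarrow> 'a::field^6" where
  "code_vec xs = (\<chi> i. of_nat (xs ! coord_index i))"

definition is_code :: "nat list \<Rightarrow> bool" where
  "is_code xs \<longleftrightarrow> length xs = 6 \<and> (\<forall>x\<in>set xs. x < 3)"

definition code_add :: "nat list \<Rightarrow> nat list \<Rightarrow> nat list" where
  "code_add xs ys = map2 (\<lambda>a b. (a + b) mod 3) xs ys"

definition code_neg :: "nat list \<Rightarrow> nat list" where
  "code_neg xs = map (\<lambda>a. 2 * a mod 3) xs"

definition singer_code :: "nat list \<Rightarrow> nat list" where
  "singer_code xs = [2 * xs ! 4 mod 3, xs ! 0, xs ! 1, xs ! 2, (xs ! 3 + xs ! 4) mod 3, xs ! 5]"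

lemma coord_index_lt: "coord_index i < 6"
  by (simp add: coord_index_def)

lemma coord_index_of_nat: "k < 6 \<Longrightarrow> coord_index (of_nat k) = k"
  by (auto simp: coord_index_def less_Suc_eq numeral_eq_Suc)

lemma axis_5_code: "code_vec [0, 0, 0, 0, 0, 1] = (axis 5 1 :: 'a::field^6)"
  unfolding vec_eq_iff
proof
  fix i :: 6
  show "(code_vec [0, 0, 0, 0, 0, 1] :: 'a^6) $ i = axis 5 1 $ i"
    using exhaust_6[of i] by (elim disjE) (simp_all add: code_vec_def coord_index_def axis_def)
qed

lemma funpow_gcd_eq:
  assumes "(f ^^ m) x = x" "(f ^^ n) x = x"
  shows "(f ^^ gcd m n) x = x"
  using assms
proof (induction m n rule: gcd_nat_induct)
  case (step m n)
  then show ?case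
    using funpow_mod_eq[where f = f and m = m and n = n and x = x] by (simp add: gcd_non_0_nat)
qed simp

lemma funpow_period_shift:
  assumes "(f ^^ n) x = x" "s \<le> n" "(f ^^ s) x = (f ^^ t) x"
  shows "(f ^^ (n - s + t)) x = x"
proof -
  have "(f ^^ (n - s + t)) x = (f ^^ (n - s)) ((f ^^ s) x)"
    using assms(3) by (simp add: funpow_add)
  also have "\<dots> = (f ^^ (n - s + s)) x"
    by (simp add: funpow_add)
  also have "\<dots> = x"
    using assms(1,2) by simp
  finally show ?thesis .
qed

lemma funpow_dvd_eq: "(f ^^ d) x = x \<Longrightarrow> d dvd n \<Longrightarrow> (f ^^ n) x = x"
  using funpow_mod_eq[where f = f and m = n and n = d and x = x] by simp

lemma dvd_242_cases: "g dvd (242 :: nat) \<Longrightarrow> g \<noteq> 242 \<Longrightarrow> g dvd 22 \<or> g dvd 121"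
proof (cases "even g")
  case False
  assume "g dvd 242"
  then have "g dvd 2 * 121"
    by simp
  moreover have "coprime g 2"
    using False by simp
  ultimately show ?thesis
    using coprime_dvd_mult_right_iff by blast
next
  case True
  assume "g dvd 242" "g \<noteq> 242"
  then obtain h where h: "g = 2 * h" "h dvd 11 ^ 2"
    using True by fastforce
  moreover have "prime (11 :: nat)"
    by simp
  ultimately obtain k where "k \<le> 2" "h = 11 ^ k"
    using divides_primepow_nat by blast
  then have "g = 2 \<or> g = 22 \<or> g = 242"
    using h(1) by (auto simp: le_Suc_eq numeral_2_eq_2)
  then show ?thesis
    using \<open>g \<noteq> 242\<close> by auto
qed

text \<open>Bounded quantification in a form that the simplifier unfolds on a numeral bound
  without first rewriting the predicate under a binder.\<close>

definition all_below :: "nat \<Rightarrow> (nat \<Rightarrow> bool) \<Rightarrow> bool" where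
  "all_below n P \<longleftrightarrow> (\<forall>k<n. P k)"

lemma all_below_0: "all_below 0 P"
  by (simp add: all_below_def)

lemma all_below_Suc: "all_below (Suc n) P \<longleftrightarrow> P n \<and> all_below n P"
  by (auto simp: all_below_def less_Suc_eq)

lemma all_below_numeral:
  "all_below (numeral n) P \<longleftrightarrow> P (pred_numeral n) \<and> all_below (pred_numeral n) P"
  by (simp add: numeral_eq_Suc all_below_Suc)

text \<open>The code of \<open>\<sigma>\<^sup>t e\<^sub>0\<close> for \<open>t < 242\<close>. This and the other lookup tables below are
  balanced decision trees rather than lists, so that the simplifier evaluates them quickly.\<close>

definition singer_power_code :: "nat \<Rightarrow> nat list" where
  "singer_power_code t = (if t < 121 then (if t < 60 then (if t < 30 then (if t < 15 then (if t <
    7 then (if t < 3 then (if t < 1 then [1,0,0,0,0,0] else (if t < 2 then [0,1,0,0,0,0] else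
    [0,0,1,0,0,0])) else (if t < 5 then (if t < 4 then [0,0,0,1,0,0] else [0,0,0,0,1,0]) else (if t
    < 6 then [2,0,0,0,1,0] else [2,2,0,0,1,0]))) else (if t < 11 then (if t < 9 then (if t < 8 then
    [2,2,2,0,1,0] else [2,2,2,2,1,0]) else (if t < 10 then [2,2,2,2,0,0] else [0,2,2,2,2,0])) else
    (if t < 13 then (if t < 12 then [1,0,2,2,1,0] else [2,1,0,2,0,0]) else (if t < 14 then
    [0,2,1,0,2,0] else [1,0,2,1,2,0])))) else (if t < 22 then (if t < 18 then (if t < 16 then
    [1,1,0,2,0,0] else (if t < 17 then [0,1,1,0,2,0] else [1,0,1,1,2,0])) else (if t < 20 then (if t
    < 19 then [1,1,0,1,0,0] else [0,1,1,0,1,0]) else (if t < 21 then [2,0,1,1,1,0] else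
    [2,2,0,1,2,0]))) else (if t < 26 then (if t < 24 then (if t < 23 then [1,2,2,0,0,0] else
    [0,1,2,2,0,0]) else (if t < 25 then [0,0,1,2,2,0] else [1,0,0,1,1,0])) else (if t < 28 then (if
    t < 27 then [2,1,0,0,2,0] else [1,2,1,0,2,0]) else (if t < 29 then [1,1,2,1,2,0] else
    [1,1,1,2,0,0]))))) else (if t < 45 then (if t < 37 then (if t < 33 then (if t < 31 then
    [0,1,1,1,2,0] else (if t < 32 then [1,0,1,1,0,0] else [0,1,0,1,1,0])) else (if t < 35 then (if t
    < 34 then [2,0,1,0,2,0] else [1,2,0,1,2,0]) else (if t < 36 then [1,1,2,0,0,0] else
    [0,1,1,2,0,0]))) else (if t < 41 then (if t < 39 then (if t < 38 then [0,0,1,1,2,0] else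
    [1,0,0,1,0,0]) else (if t < 40 then [0,1,0,0,1,0] else [2,0,1,0,1,0])) else (if t < 43 then (if
    t < 42 then [2,2,0,1,1,0] else [2,2,2,0,2,0]) else (if t < 44 then [1,2,2,2,2,0] else
    [1,1,2,2,1,0])))) else (if t < 52 then (if t < 48 then (if t < 46 then [2,1,1,2,0,0] else (if t
    < 47 then [0,2,1,1,2,0] else [1,0,2,1,0,0])) else (if t < 50 then (if t < 49 then [0,1,0,2,1,0]
    else [2,0,1,0,0,0]) else (if t < 51 then [0,2,0,1,0,0] else [0,0,2,0,1,0]))) else (if t < 56
    then (if t < 54 then (if t < 53 then [2,0,0,2,1,0] else [2,2,0,0,0,0]) else (if t < 55 then
    [0,2,2,0,0,0] else [0,0,2,2,0,0])) else (if t < 58 then (if t < 57 then [0,0,0,2,2,0] else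
    [1,0,0,0,1,0]) else (if t < 59 then [2,1,0,0,1,0] else [2,2,1,0,1,0])))))) else (if t < 90 then
    (if t < 75 then (if t < 67 then (if t < 63 then (if t < 61 then [2,2,2,1,1,0] else (if t < 62
    then [2,2,2,2,2,0] else [1,2,2,2,1,0])) else (if t < 65 then (if t < 64 then [2,1,2,2,0,0] else
    [0,2,1,2,2,0]) else (if t < 66 then [1,0,2,1,1,0] else [2,1,0,2,2,0]))) else (if t < 71 then (if
    t < 69 then (if t < 68 then [1,2,1,0,1,0] else [2,1,2,1,1,0]) else (if t < 70 then [2,2,1,2,2,0]
    else [1,2,2,1,1,0])) else (if t < 73 then (if t < 72 then [2,1,2,2,2,0] else [1,2,1,2,1,0]) else
    (if t < 74 then [2,1,2,1,0,0] else [0,2,1,2,1,0])))) else (if t < 82 then (if t < 78 then (if t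
    < 76 then [2,0,2,1,0,0] else (if t < 77 then [0,2,0,2,1,0] else [2,0,2,0,0,0])) else (if t < 80
    then (if t < 79 then [0,2,0,2,0,0] else [0,0,2,0,2,0]) else (if t < 81 then [1,0,0,2,2,0] else
    [1,1,0,0,1,0]))) else (if t < 86 then (if t < 84 then (if t < 83 then [2,1,1,0,1,0] else
    [2,2,1,1,1,0]) else (if t < 85 then [2,2,2,1,2,0] else [1,2,2,2,0,0])) else (if t < 88 then (if
    t < 87 then [0,1,2,2,2,0] else [1,0,1,2,1,0]) else (if t < 89 then [2,1,0,1,0,0] else
    [0,2,1,0,1,0]))))) else (if t < 105 then (if t < 97 then (if t < 93 then (if t < 91 then
    [2,0,2,1,1,0] else (if t < 92 then [2,2,0,2,2,0] else [1,2,2,0,1,0])) else (if t < 95 then (if t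
    < 94 then [2,1,2,2,1,0] else [2,2,1,2,0,0]) else (if t < 96 then [0,2,2,1,2,0] else
    [1,0,2,2,0,0]))) else (if t < 101 then (if t < 99 then (if t < 98 then [0,1,0,2,2,0] else
    [1,0,1,0,1,0]) else (if t < 100 then [2,1,0,1,1,0] else [2,2,1,0,2,0])) else (if t < 103 then
    (if t < 102 then [1,2,2,1,2,0] else [1,1,2,2,0,0]) else (if t < 104 then [0,1,1,2,2,0] else
    [1,0,1,1,1,0])))) else (if t < 113 then (if t < 109 then (if t < 107 then (if t < 106 then
    [2,1,0,1,2,0] else [1,2,1,0,0,0]) else (if t < 108 then [0,1,2,1,0,0] else [0,0,1,2,1,0])) else
    (if t < 111 then (if t < 110 then [2,0,0,1,0,0] else [0,2,0,0,1,0]) else (if t < 112 then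
    [2,0,2,0,1,0] else [2,2,0,2,1,0]))) else (if t < 117 then (if t < 115 then (if t < 114 then
    [2,2,2,0,0,0] else [0,2,2,2,0,0]) else (if t < 116 then [0,0,2,2,2,0] else [1,0,0,2,1,0])) else
    (if t < 119 then (if t < 118 then [2,1,0,0,0,0] else [0,2,1,0,0,0]) else (if t < 120 then
    [0,0,2,1,0,0] else [0,0,0,2,1,0]))))))) else (if t < 181 then (if t < 151 then (if t < 136 then
    (if t < 128 then (if t < 124 then (if t < 122 then [2,0,0,0,0,0] else (if t < 123 then
    [0,2,0,0,0,0] else [0,0,2,0,0,0])) else (if t < 126 then (if t < 125 then [0,0,0,2,0,0] else
    [0,0,0,0,2,0]) else (if t < 127 then [1,0,0,0,2,0] else [1,1,0,0,2,0]))) else (if t < 132 then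
    (if t < 130 then (if t < 129 then [1,1,1,0,2,0] else [1,1,1,1,2,0]) else (if t < 131 then
    [1,1,1,1,0,0] else [0,1,1,1,1,0])) else (if t < 134 then (if t < 133 then [2,0,1,1,2,0] else
    [1,2,0,1,0,0]) else (if t < 135 then [0,1,2,0,1,0] else [2,0,1,2,1,0])))) else (if t < 143 then
    (if t < 139 then (if t < 137 then [2,2,0,1,0,0] else (if t < 138 then [0,2,2,0,1,0] else
    [2,0,2,2,1,0])) else (if t < 141 then (if t < 140 then [2,2,0,2,0,0] else [0,2,2,0,2,0]) else
    (if t < 142 then [1,0,2,2,2,0] else [1,1,0,2,1,0]))) else (if t < 147 then (if t < 145 then (if
    t < 144 then [2,1,1,0,0,0] else [0,2,1,1,0,0]) else (if t < 146 then [0,0,2,1,1,0] else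
    [2,0,0,2,2,0])) else (if t < 149 then (if t < 148 then [1,2,0,0,1,0] else [2,1,2,0,1,0]) else
    (if t < 150 then [2,2,1,2,1,0] else [2,2,2,1,0,0]))))) else (if t < 166 then (if t < 158 then
    (if t < 154 then (if t < 152 then [0,2,2,2,1,0] else (if t < 153 then [2,0,2,2,0,0] else
    [0,2,0,2,2,0])) else (if t < 156 then (if t < 155 then [1,0,2,0,1,0] else [2,1,0,2,1,0]) else
    (if t < 157 then [2,2,1,0,0,0] else [0,2,2,1,0,0]))) else (if t < 162 then (if t < 160 then (if
    t < 159 then [0,0,2,2,1,0] else [2,0,0,2,0,0]) else (if t < 161 then [0,2,0,0,2,0] else
    [1,0,2,0,2,0])) else (if t < 164 then (if t < 163 then [1,1,0,2,2,0] else [1,1,1,0,1,0]) else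
    (if t < 165 then [2,1,1,1,1,0] else [2,2,1,1,2,0])))) else (if t < 173 then (if t < 169 then (if
    t < 167 then [1,2,2,1,0,0] else (if t < 168 then [0,1,2,2,1,0] else [2,0,1,2,0,0])) else (if t <
    171 then (if t < 170 then [0,2,0,1,2,0] else [1,0,2,0,0,0]) else (if t < 172 then [0,1,0,2,0,0]
    else [0,0,1,0,2,0]))) else (if t < 177 then (if t < 175 then (if t < 174 then [1,0,0,1,2,0] else
    [1,1,0,0,0,0]) else (if t < 176 then [0,1,1,0,0,0] else [0,0,1,1,0,0])) else (if t < 179 then
    (if t < 178 then [0,0,0,1,1,0] else [2,0,0,0,2,0]) else (if t < 180 then [1,2,0,0,2,0] else
    [1,1,2,0,2,0])))))) else (if t < 211 then (if t < 196 then (if t < 188 then (if t < 184 then (if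
    t < 182 then [1,1,1,2,2,0] else (if t < 183 then [1,1,1,1,1,0] else [2,1,1,1,2,0])) else (if t <
    186 then (if t < 185 then [1,2,1,1,0,0] else [0,1,2,1,1,0]) else (if t < 187 then [2,0,1,2,2,0]
    else [1,2,0,1,1,0]))) else (if t < 192 then (if t < 190 then (if t < 189 then [2,1,2,0,2,0] else
    [1,2,1,2,2,0]) else (if t < 191 then [1,1,2,1,1,0] else [2,1,1,2,2,0])) else (if t < 194 then
    (if t < 193 then [1,2,1,1,1,0] else [2,1,2,1,2,0]) else (if t < 195 then [1,2,1,2,0,0] else
    [0,1,2,1,2,0])))) else (if t < 203 then (if t < 199 then (if t < 197 then [1,0,1,2,0,0] else (if
    t < 198 then [0,1,0,1,2,0] else [1,0,1,0,0,0])) else (if t < 201 then (if t < 200 then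
    [0,1,0,1,0,0] else [0,0,1,0,1,0]) else (if t < 202 then [2,0,0,1,1,0] else [2,2,0,0,2,0]))) else
    (if t < 207 then (if t < 205 then (if t < 204 then [1,2,2,0,2,0] else [1,1,2,2,2,0]) else (if t
    < 206 then [1,1,1,2,1,0] else [2,1,1,1,0,0])) else (if t < 209 then (if t < 208 then
    [0,2,1,1,1,0] else [2,0,2,1,2,0]) else (if t < 210 then [1,2,0,2,0,0] else [0,1,2,0,2,0])))))
    else (if t < 226 then (if t < 218 then (if t < 214 then (if t < 212 then [1,0,1,2,2,0] else (if
    t < 213 then [1,1,0,1,1,0] else [2,1,1,0,2,0])) else (if t < 216 then (if t < 215 then
    [1,2,1,1,2,0] else [1,1,2,1,0,0]) else (if t < 217 then [0,1,1,2,1,0] else [2,0,1,1,0,0]))) else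
    (if t < 222 then (if t < 220 then (if t < 219 then [0,2,0,1,1,0] else [2,0,2,0,2,0]) else (if t
    < 221 then [1,2,0,2,2,0] else [1,1,2,0,1,0])) else (if t < 224 then (if t < 223 then
    [2,1,1,2,1,0] else [2,2,1,1,0,0]) else (if t < 225 then [0,2,2,1,1,0] else [2,0,2,2,2,0]))))
    else (if t < 234 then (if t < 230 then (if t < 228 then (if t < 227 then [1,2,0,2,1,0] else
    [2,1,2,0,0,0]) else (if t < 229 then [0,2,1,2,0,0] else [0,0,2,1,2,0])) else (if t < 232 then
    (if t < 231 then [1,0,0,2,0,0] else [0,1,0,0,2,0]) else (if t < 233 then [1,0,1,0,2,0] else
    [1,1,0,1,2,0]))) else (if t < 238 then (if t < 236 then (if t < 235 then [1,1,1,0,0,0] else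
    [0,1,1,1,0,0]) else (if t < 237 then [0,0,1,1,1,0] else [2,0,0,1,2,0])) else (if t < 240 then
    (if t < 239 then [1,2,0,0,0,0] else [0,1,2,0,0,0]) else (if t < 241 then [0,0,1,2,0,0] else
    [0,0,0,1,2,0]))))))))"

definition singer_power_step :: "nat \<Rightarrow> bool" where
  "singer_power_step t \<longleftrightarrow> singer_power_code (Suc t mod 242) = singer_code (singer_power_code t)"

lemma singer_power_code_0: "singer_power_code 0 = [1, 0, 0, 0, 0, 0]"
  by (simp add: singer_power_code_def)

lemma axis_0_code: "code_vec (singer_power_code 0) = (axis 0 1 :: 'a::field^6)"
  unfolding vec_eq_iff
proof
  fix i :: 6
  show "(code_vec (singer_power_code 0) :: 'a^6) $ i = axis 0 1 $ i"
    using exhaust_6[of i]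
    by (elim disjE) (simp_all add: singer_power_code_0 code_vec_def coord_index_def axis_def)
qed

lemma singer_power_steps: "all_below 242 singer_power_step"
  by (simp add: all_below_numeral all_below_Suc all_below_0 singer_power_step_def singer_power_code_def
      singer_code_def)

lemma singer_power_code_Suc:
  "t < 242 \<Longrightarrow> singer_power_code (Suc t mod 242) = singer_code (singer_power_code t)"
  using singer_power_steps by (simp add: all_below_def singer_power_step_def)

lemma length_singer_power_code: "t < 242 \<Longrightarrow> length (singer_power_code t) = 6"
proof (cases t)
  case (Suc s)
  then show "t < 242 \<Longrightarrow> length (singer_power_code t) = 6"
    using singer_power_code_Suc[of s] by (simp add: singer_code_def)
qed (simp add: singer_power_code_0)

section \<open>Numbering the points\<close>

definition point_vec :: "nat \<Rightarrow> 'a::field^6" where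
  "point_vec c = (if c < 121 then (singer ^^ c) (axis 0 1) else if c = 121 then axis 5 1
                  else (singer ^^ (c - 122)) (axis 0 1) + axis 5 1)"

definition point_code :: "nat \<Rightarrow> nat list" where
  "point_code c = (if c < 121 then singer_power_code c else if c = 121 then [0, 0, 0, 0, 0, 1]
                   else code_add (singer_power_code (c - 122)) [0, 0, 0, 0, 0, 1])"

lemma length_point_code: "c < 364 \<Longrightarrow> length (point_code c) = 6"
  by (simp add: point_code_def length_singer_power_code code_add_def)

text \<open>With this numbering, \<open>\<sigma>\<^sup>2\<^sup>j\<close> maps point \<open>c\<close> to point \<open>shift j c\<close>.\<close>

definition shift :: "nat \<Rightarrow> nat \<Rightarrow> nat" where
  "shift j c = (if c < 121 then (c + 2 * j) mod 121 else if c = 121 then 121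
                else 122 + (c - 122 + 2 * j) mod 242)"

lemma shift_lt: "c < 364 \<Longrightarrow> shift j c < 364"
proof -
  have "x mod 121 < 364" "x mod 242 < 242" for x :: nat
    using mod_less_divisor[of 121 x] by simp_all
  then show "c < 364 \<Longrightarrow> shift j c < 364"
    by (simp add: shift_def)
qed

lemma shift_0: "c < 364 \<Longrightarrow> shift 0 c = c"
  by (simp add: shift_def)

lemma shift_shift: "shift j (shift k c) = shift (j + k) c"
proof -
  consider "c < 121" | "c = 121" | "c \<ge> 122"
    by linarith
  then show ?thesis
  proof cases
    case 1
    then have "shift j (shift k c) = ((c + 2 * k) mod 121 + 2 * j) mod 121"
      by (simp add: shift_def)
    also have "\<dots> = (c + 2 * k + 2 * j) mod 121"
      by (rule mod_add_left_eq)
    finally show ?thesis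
      using 1 by (simp add: shift_def algebra_simps)
  next
    case 3
    then have "shift j (shift k c) = 122 + ((c - 122 + 2 * k) mod 242 + 2 * j) mod 242"
      by (simp add: shift_def)
    also have "\<dots> = 122 + (c - 122 + 2 * k + 2 * j) mod 242"
      by (simp only: mod_add_left_eq)
    finally show ?thesis
      using 3 by (simp add: shift_def algebra_simps)
  qed (simp add: shift_def)
qed

lemma shift_mod: "shift (j mod 121) c = shift j c"
proof -
  have "(x + 2 * (j mod 121)) mod 121 = (x + 2 * j) mod 121" for x
    by (metis mod_add_right_eq mod_mult_right_eq)
  moreover have "(x + 2 * (j mod 121)) mod 242 = (x + 2 * j) mod 242" for x
    using mod_mult_mult1[of 2 j 121] by (metis mod_add_right_eq num_double numeral_times_numeral)
  ultimately show ?thesis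
    unfolding shift_def by (simp only:)
qed

lemma shift_inverse: "c < 364 \<Longrightarrow> shift (120 * j) (shift j c) = c"
  using shift_mod[of "121 * j" c] by (simp add: shift_shift shift_0)

lemma shift_inverse': "c < 364 \<Longrightarrow> shift j (shift (120 * j) c) = c"
  using shift_mod[of "121 * j" c] by (simp add: shift_shift shift_0)

lemma shift_inj: "c < 364 \<Longrightarrow> c' < 364 \<Longrightarrow> shift j c = shift j c' \<Longrightarrow> c = c'"
  by (metis shift_inverse)

lemma shift_orbit_representative:
  assumes "c < 364"
  obtains m r where "r \<in> {0, 121, 122, 123}" "c = shift m r"
proof -
  consider "c < 121" | "c = 121" | "c \<ge> 122" "even (c - 122)" | "c \<ge> 122" "odd (c - 122)"
    by linarith
  then show ?thesis
  proof cases
    case 1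
    have "(c + 121 * c) mod 121 = c"
      using 1 by (simp only: mod_mult_self2 mod_less)
    then have "c = shift (61 * c) 0"
      by (simp add: shift_def)
    then show ?thesis
      using that by blast
  next
    case 2
    then show ?thesis
      using that[of 121 0] by (simp add: shift_def)
  next
    case 3
    from 3(2) obtain m where "c - 122 = 2 * m"
      by (rule evenE)
    then have "c = shift m 122"
      using assms 3 by (simp add: shift_def)
    then show ?thesis
      using that by blast
  next
    case 4
    from 4(2) obtain m where "c - 122 = 2 * m + 1"
      by (rule oddE)
    then have "c = shift m 123"
      using assms 4 by (simp add: shift_def)
    then show ?thesis
      using that by blast
  qed
qed

section \<open>The base spread\<close>

text \<open>The 91 lines of \<open>S\<^sub>0\<close>, each listed as \<open>[a, b, c, d]\<close> where the points \<open>c\<close> and \<open>d\<close>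
  are spanned by the sum and the difference of (suitable representatives of) \<open>a\<close> and \<open>b\<close>.\<close>

definition base_spread :: "nat list list" where
  "base_spread =
    [[121, 0, 122, 243], [4, 29, 84, 60], [126, 124, 201, 51], [247, 88, 227, 342],
     [3, 240, 266, 350], [125, 269, 188, 105], [246, 250, 182, 8], [56, 19, 36, 30],
     [299, 220, 260, 75], [178, 270, 306, 72], [120, 332, 145, 307], [363, 6, 258, 334],
     [242, 1, 170, 198], [2, 248, 354, 283], [245, 200, 357, 107], [79, 249, 343, 356],
     [322, 234, 312, 9], [294, 174, 169, 104], [173, 309, 344, 63], [55, 213, 206, 222],
     [298, 255, 195, 22], [177, 143, 285, 69], [115, 360, 165, 314], [358, 78, 211, 338],
     [237, 172, 141, 74], [37, 58, 85, 71], [159, 160, 212, 33], [280, 41, 164, 337],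
     [119, 282, 217, 186], [362, 26, 313, 194], [241, 300, 209, 65], [108, 57, 90, 47],
     [230, 319, 176, 46], [351, 295, 254, 77], [24, 264, 252, 302], [146, 202, 347, 49],
     [267, 156, 328, 67], [123, 171, 144, 35], [244, 142, 326, 43], [39, 38, 91, 34],
     [161, 187, 271, 45], [110, 276, 325, 157], [353, 339, 184, 83], [232, 98, 149, 235],
     [321, 320, 131, 73], [32, 359, 134, 128], [154, 263, 278, 70], [275, 199, 304, 68],
     [76, 281, 163, 148], [50, 20, 28, 82], [293, 330, 189, 61], [48, 155, 167, 205],
     [291, 40, 345, 192], [97, 197, 310, 130], [219, 52, 210, 203], [340, 116, 301, 261],
     [54, 136, 336, 355], [297, 292, 175, 106], [262, 323, 151, 62], [16, 133, 137, 311],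
     [138, 162, 228, 81], [259, 226, 277, 94], [114, 31, 117, 102], [236, 233, 150, 99],
     [10, 87, 12, 59], [253, 231, 223, 42], [132, 153, 180, 44], [152, 11, 296, 215],
     [273, 5, 183, 207], [158, 96, 140, 349], [279, 341, 166, 66], [95, 290, 324, 190],
     [103, 352, 251, 214], [225, 179, 272, 101], [346, 147, 286, 113], [118, 268, 191, 193],
     [361, 274, 288, 18], [13, 111, 53, 92], [256, 80, 224, 315], [135, 333, 305, 15],
     [89, 218, 348, 303], [229, 17, 284, 204], [64, 109, 100, 93], [317, 14, 327, 239],
     [196, 139, 265, 21], [23, 257, 221, 129], [289, 308, 331, 7], [168, 25, 316, 181],
     [86, 127, 185, 287], [208, 238, 216, 27], [329, 318, 335, 112]]"

definition base_line_of :: "nat \<Rightarrow> nat" where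
  "base_line_of x = (if x < 182 then (if x < 91 then (if x < 45 then (if x < 22 then (if x < 11
    then (if x < 5 then (if x < 2 then (if x < 1 then 0 else 12) else (if x < 3 then 13 else (if x <
    4 then 4 else 1))) else (if x < 8 then (if x < 6 then 68 else (if x < 7 then 11 else 86)) else
    (if x < 9 then 6 else (if x < 10 then 16 else 64)))) else (if x < 16 then (if x < 13 then (if x
    < 12 then 67 else 64) else (if x < 14 then 77 else (if x < 15 then 83 else 79))) else (if x < 19
    then (if x < 17 then 59 else (if x < 18 then 81 else 76)) else (if x < 20 then 7 else (if x < 21
    then 49 else 84))))) else (if x < 33 then (if x < 27 then (if x < 24 then (if x < 23 then 20
    else 85) else (if x < 25 then 34 else (if x < 26 then 87 else 29))) else (if x < 30 then (if x <
    28 then 89 else (if x < 29 then 49 else 1)) else (if x < 31 then 7 else (if x < 32 then 62 else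
    45)))) else (if x < 39 then (if x < 36 then (if x < 34 then 26 else (if x < 35 then 39 else 37))
    else (if x < 37 then 7 else (if x < 38 then 25 else 39))) else (if x < 42 then (if x < 40 then
    39 else (if x < 41 then 52 else 27)) else (if x < 43 then 65 else (if x < 44 then 38 else
    66)))))) else (if x < 68 then (if x < 56 then (if x < 50 then (if x < 47 then (if x < 46 then 40
    else 32) else (if x < 48 then 31 else (if x < 49 then 51 else 35))) else (if x < 53 then (if x <
    51 then 49 else (if x < 52 then 2 else 54)) else (if x < 54 then 77 else (if x < 55 then 56 else
    19)))) else (if x < 62 then (if x < 59 then (if x < 57 then 7 else (if x < 58 then 31 else 25))
    else (if x < 60 then 64 else (if x < 61 then 1 else 50))) else (if x < 65 then (if x < 63 then
    58 else (if x < 64 then 18 else 82)) else (if x < 66 then 30 else (if x < 67 then 70 else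
    36))))) else (if x < 79 then (if x < 73 then (if x < 70 then (if x < 69 then 47 else 21) else
    (if x < 71 then 46 else (if x < 72 then 25 else 9))) else (if x < 76 then (if x < 74 then 44
    else (if x < 75 then 24 else 8)) else (if x < 77 then 48 else (if x < 78 then 33 else 23))))
    else (if x < 85 then (if x < 82 then (if x < 80 then 15 else (if x < 81 then 78 else 60)) else
    (if x < 83 then 49 else (if x < 84 then 42 else 1))) else (if x < 88 then (if x < 86 then 25
    else (if x < 87 then 88 else 64)) else (if x < 89 then 3 else (if x < 90 then 80 else 31)))))))
    else (if x < 136 then (if x < 113 then (if x < 102 then (if x < 96 then (if x < 93 then (if x <
    92 then 39 else 77) else (if x < 94 then 82 else (if x < 95 then 61 else 71))) else (if x < 99
    then (if x < 97 then 69 else (if x < 98 then 53 else 43)) else (if x < 100 then 63 else (if x <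
    101 then 82 else 73)))) else (if x < 107 then (if x < 104 then (if x < 103 then 62 else 72) else
    (if x < 105 then 17 else (if x < 106 then 5 else 57))) else (if x < 110 then (if x < 108 then 14
    else (if x < 109 then 31 else 82)) else (if x < 111 then 41 else (if x < 112 then 77 else
    90))))) else (if x < 124 then (if x < 118 then (if x < 115 then (if x < 114 then 74 else 62)
    else (if x < 116 then 22 else (if x < 117 then 55 else 62))) else (if x < 121 then (if x < 119
    then 75 else (if x < 120 then 28 else 10)) else (if x < 122 then 0 else (if x < 123 then 0 else
    37)))) else (if x < 130 then (if x < 127 then (if x < 125 then 2 else (if x < 126 then 5 else
    2)) else (if x < 128 then 88 else (if x < 129 then 45 else 85))) else (if x < 133 then (if x <
    131 then 53 else (if x < 132 then 44 else 66)) else (if x < 134 then 59 else (if x < 135 then 45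
    else 79)))))) else (if x < 159 then (if x < 147 then (if x < 141 then (if x < 138 then (if x <
    137 then 56 else 59) else (if x < 139 then 60 else (if x < 140 then 84 else 69))) else (if x <
    144 then (if x < 142 then 24 else (if x < 143 then 38 else 21)) else (if x < 145 then 37 else
    (if x < 146 then 10 else 35)))) else (if x < 153 then (if x < 150 then (if x < 148 then 74 else
    (if x < 149 then 48 else 43)) else (if x < 151 then 63 else (if x < 152 then 58 else 67))) else
    (if x < 156 then (if x < 154 then 66 else (if x < 155 then 46 else 51)) else (if x < 157 then 36
    else (if x < 158 then 41 else 69))))) else (if x < 170 then (if x < 164 then (if x < 161 then
    (if x < 160 then 26 else 26) else (if x < 162 then 40 else (if x < 163 then 60 else 48))) else
    (if x < 167 then (if x < 165 then 27 else (if x < 166 then 22 else 70)) else (if x < 168 then 51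
    else (if x < 169 then 87 else 17)))) else (if x < 176 then (if x < 173 then (if x < 171 then 12
    else (if x < 172 then 37 else 24)) else (if x < 174 then 18 else (if x < 175 then 17 else 57)))
    else (if x < 179 then (if x < 177 then 32 else (if x < 178 then 21 else 9)) else (if x < 180
    then 73 else (if x < 181 then 66 else 87)))))))) else (if x < 273 then (if x < 227 then (if x <
    204 then (if x < 193 then (if x < 187 then (if x < 184 then (if x < 183 then 6 else 68) else (if
    x < 185 then 42 else (if x < 186 then 88 else 28))) else (if x < 190 then (if x < 188 then 40
    else (if x < 189 then 5 else 50)) else (if x < 191 then 71 else (if x < 192 then 75 else 52))))
    else (if x < 198 then (if x < 195 then (if x < 194 then 75 else 29) else (if x < 196 then 20
    else (if x < 197 then 84 else 53))) else (if x < 201 then (if x < 199 then 12 else (if x < 200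
    then 47 else 14)) else (if x < 202 then 2 else (if x < 203 then 35 else 54))))) else (if x < 215
    then (if x < 209 then (if x < 206 then (if x < 205 then 81 else 51) else (if x < 207 then 19
    else (if x < 208 then 68 else 89))) else (if x < 212 then (if x < 210 then 30 else (if x < 211
    then 54 else 23)) else (if x < 213 then 26 else (if x < 214 then 19 else 72)))) else (if x < 221
    then (if x < 218 then (if x < 216 then 67 else (if x < 217 then 89 else 28)) else (if x < 219
    then 80 else (if x < 220 then 54 else 8))) else (if x < 224 then (if x < 222 then 85 else (if x
    < 223 then 19 else 65)) else (if x < 225 then 78 else (if x < 226 then 73 else 61)))))) else (if
    x < 250 then (if x < 238 then (if x < 232 then (if x < 229 then (if x < 228 then 3 else 60) else
    (if x < 230 then 81 else (if x < 231 then 32 else 65))) else (if x < 235 then (if x < 233 then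
    43 else (if x < 234 then 63 else 16)) else (if x < 236 then 43 else (if x < 237 then 63 else
    24)))) else (if x < 244 then (if x < 241 then (if x < 239 then 89 else (if x < 240 then 83 else
    4)) else (if x < 242 then 30 else (if x < 243 then 12 else 0))) else (if x < 247 then (if x <
    245 then 38 else (if x < 246 then 14 else 6)) else (if x < 248 then 3 else (if x < 249 then 13
    else 15))))) else (if x < 261 then (if x < 255 then (if x < 252 then (if x < 251 then 6 else 72)
    else (if x < 253 then 34 else (if x < 254 then 65 else 33))) else (if x < 258 then (if x < 256
    then 20 else (if x < 257 then 78 else 85)) else (if x < 259 then 11 else (if x < 260 then 61
    else 8)))) else (if x < 267 then (if x < 264 then (if x < 262 then 55 else (if x < 263 then 58
    else 46)) else (if x < 265 then 34 else (if x < 266 then 84 else 4))) else (if x < 270 then (if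
    x < 268 then 36 else (if x < 269 then 75 else 5)) else (if x < 271 then 9 else (if x < 272 then
    40 else 73))))))) else (if x < 318 then (if x < 295 then (if x < 284 then (if x < 278 then (if x
    < 275 then (if x < 274 then 68 else 76) else (if x < 276 then 47 else (if x < 277 then 41 else
    61))) else (if x < 281 then (if x < 279 then 46 else (if x < 280 then 70 else 27)) else (if x <
    282 then 48 else (if x < 283 then 28 else 13)))) else (if x < 289 then (if x < 286 then (if x <
    285 then 81 else 21) else (if x < 287 then 74 else (if x < 288 then 88 else 76))) else (if x <
    292 then (if x < 290 then 86 else (if x < 291 then 71 else 52)) else (if x < 293 then 57 else
    (if x < 294 then 50 else 17))))) else (if x < 306 then (if x < 300 then (if x < 297 then (if x <
    296 then 33 else 67) else (if x < 298 then 57 else (if x < 299 then 20 else 8))) else (if x <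
    303 then (if x < 301 then 30 else (if x < 302 then 55 else 34)) else (if x < 304 then 80 else
    (if x < 305 then 47 else 79)))) else (if x < 312 then (if x < 309 then (if x < 307 then 9 else
    (if x < 308 then 10 else 86)) else (if x < 310 then 18 else (if x < 311 then 53 else 59))) else
    (if x < 315 then (if x < 313 then 16 else (if x < 314 then 29 else 22)) else (if x < 316 then 78
    else (if x < 317 then 87 else 83)))))) else (if x < 341 then (if x < 329 then (if x < 323 then
    (if x < 320 then (if x < 319 then 90 else 32) else (if x < 321 then 44 else (if x < 322 then 44
    else 16))) else (if x < 326 then (if x < 324 then 58 else (if x < 325 then 71 else 41)) else (if
    x < 327 then 38 else (if x < 328 then 83 else 36)))) else (if x < 335 then (if x < 332 then (if
    x < 330 then 90 else (if x < 331 then 50 else 86)) else (if x < 333 then 10 else (if x < 334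
    then 79 else 11))) else (if x < 338 then (if x < 336 then 90 else (if x < 337 then 56 else 27))
    else (if x < 339 then 23 else (if x < 340 then 42 else 55))))) else (if x < 352 then (if x < 346
    then (if x < 343 then (if x < 342 then 70 else 3) else (if x < 344 then 15 else (if x < 345 then
    18 else 52))) else (if x < 349 then (if x < 347 then 74 else (if x < 348 then 35 else 80)) else
    (if x < 350 then 69 else (if x < 351 then 4 else 33)))) else (if x < 358 then (if x < 355 then
    (if x < 353 then 72 else (if x < 354 then 42 else 13)) else (if x < 356 then 56 else (if x < 357
    then 15 else 14))) else (if x < 361 then (if x < 359 then 23 else (if x < 360 then 45 else 22))
    else (if x < 362 then 76 else (if x < 363 then 29 else 11)))))))))"

definition on_base_line :: "nat \<Rightarrow> nat \<Rightarrow> bool" where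
  "on_base_line i x \<longleftrightarrow> x < 364 \<and> base_line_of x = i"

definition base_line_ok :: "nat \<Rightarrow> nat list \<Rightarrow> bool" where
  "base_line_ok i l \<longleftrightarrow> length l = 4 \<and> distinct l \<and> list_all (on_base_line i) l"

definition code_pm_eq :: "nat list \<Rightarrow> nat list \<Rightarrow> bool" where
  "code_pm_eq xs ys \<longleftrightarrow> xs = ys \<or> xs = code_neg ys"

fun is_line_quadruple :: "nat list \<Rightarrow> bool" where
  "is_line_quadruple [a, b, c, d] \<longleftrightarrow>
     code_pm_eq (code_add (point_code a) (point_code b)) (point_code c) \<and>
     code_pm_eq (code_add (point_code a) (code_neg (point_code b))) (point_code d)"
| "is_line_quadruple _ \<longleftrightarrow> False"

lemma base_spread_check:
  "length base_spread = 91 \<and> list_all (case_prod base_line_ok) (List.enumerate 0 base_spread)"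
  by (simp add: base_spread_def base_line_ok_def on_base_line_def base_line_of_def)

lemma base_spread_quadruples: "list_all is_line_quadruple base_spread"
  by (simp add: base_spread_def point_code_def singer_power_code_def code_pm_eq_def code_add_def
      code_neg_def)

lemma base_spread_nth:
  assumes "i < 91"
  shows "length (base_spread ! i) = 4" "distinct (base_spread ! i)"
    and "x \<in> set (base_spread ! i) \<Longrightarrow> x < 364 \<and> base_line_of x = i"
proof -
  have "base_line_ok i (base_spread ! i)"
    using base_spread_check assms unfolding list_all_length by (auto simp: nth_enumerate_eq)
  then show "length (base_spread ! i) = 4" "distinct (base_spread ! i)"
    and "x \<in> set (base_spread ! i) \<Longrightarrow> x < 364 \<and> base_line_of x = i"
    by (auto simp: base_line_ok_def on_base_line_def list_all_iff)
qed

lemma base_spread_nthE: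
  assumes "i < 91"
  obtains a b c d where "base_spread ! i = [a, b, c, d]"
  using base_spread_nth(1)[OF assms] by (auto simp: length_Suc_conv numeral_eq_Suc)

lemma base_line_of_mem:
  assumes "x < 364"
  shows "base_line_of x < 91" "x \<in> set (base_spread ! base_line_of x)"
proof -
  have "card (\<Union>i<91. set (base_spread ! i)) = (\<Sum>i<91. card (set (base_spread ! i)))"
    using base_spread_nth(3) by (intro card_UN_disjoint) auto
  also have "\<dots> = 364"
    using base_spread_nth(1,2) by (simp add: distinct_card)
  finally have "(\<Union>i<91. set (base_spread ! i)) = {..<364}"
    using base_spread_nth(3) by (intro card_subset_eq) auto
  then obtain i where "i < 91" "x \<in> set (base_spread ! i)"
    using assms by blast
  then show "base_line_of x < 91" "x \<in> set (base_spread ! base_line_of x)"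
    using base_spread_nth(3) by auto
qed

definition block :: "nat \<Rightarrow> nat \<Rightarrow> nat set" where
  "block j i = shift j ` set (base_spread ! i)"

text \<open>As \<open>shift (120 * j)\<close> inverts \<open>shift j\<close>, \<open>line_index j c\<close> is the number of the
  block of the \<open>j\<close>-th spread that contains \<open>c\<close>.\<close>

definition line_index :: "nat \<Rightarrow> nat \<Rightarrow> nat" where
  "line_index j c = base_line_of (shift (120 * j) c)"

lemma line_index_lt: "c < 364 \<Longrightarrow> line_index j c < 91"
  by (simp add: line_index_def base_line_of_mem(1) shift_lt)

lemma block_lt: "i < 91 \<Longrightarrow> y \<in> block j i \<Longrightarrow> y < 364"
  using base_spread_nth(3) shift_lt by (auto simp: block_def)

lemma mem_block_iff:
  assumes "c < 364" "i < 91"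
  shows "c \<in> block j i \<longleftrightarrow> i = line_index j c"
proof -
  have "c \<in> block j i \<longleftrightarrow> shift (120 * j) c \<in> set (base_spread ! i)"
  proof
    assume "c \<in> block j i"
    then obtain x where "x \<in> set (base_spread ! i)" "c = shift j x"
      by (auto simp: block_def)
    then show "shift (120 * j) c \<in> set (base_spread ! i)"
      using base_spread_nth(3)[OF assms(2)] shift_inverse by auto
  next
    assume "shift (120 * j) c \<in> set (base_spread ! i)"
    then show "c \<in> block j i"
      unfolding block_def using shift_inverse'[OF assms(1)] by (metis image_eqI)
  qed
  also have "\<dots> \<longleftrightarrow> i = line_index j c"
    using base_spread_nth(3)[OF assms(2)] base_line_of_mem[OF shift_lt[OF assms(1)]]
    unfolding line_index_def by metis
  finally show ?thesis .
qed

lemma card_block: "i < 91 \<Longrightarrow> card (block j i) = 4"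
proof -
  assume i: "i < 91"
  have "inj_on (shift j) (set (base_spread ! i))"
    using base_spread_nth(3)[OF i] shift_inj by (auto intro: inj_onI)
  then show "card (block j i) = 4"
    using base_spread_nth(1,2)[OF i] by (simp add: block_def card_image distinct_card)
qed

lemma shift_block: "i < 91 \<Longrightarrow> shift m ` block j i = block ((j + m) mod 121) i"
  unfolding block_def image_image by (simp add: shift_shift shift_mod add.commute)

definition block_through :: "nat \<Rightarrow> nat \<Rightarrow> nat set" where
  "block_through j r = block j (line_index j r)"

lemma mem_block_through: "r < 364 \<Longrightarrow> r \<in> block_through j r"
  by (simp add: block_through_def mem_block_iff line_index_lt)

lemma block_through_lt: "r < 364 \<Longrightarrow> y \<in> block_through j r \<Longrightarrow> y < 364"
  using block_lt[OF line_index_lt] by (auto simp: block_through_def)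

lemma shift_block_through:
  assumes "r < 364"
  shows "shift m ` block_through j r = block_through ((j + m) mod 121) (shift m r)"
proof -
  define i where "i = line_index j r"
  have i: "i < 91"
    using assms by (simp add: i_def line_index_lt)
  have "r \<in> block j i"
    using mem_block_through[OF assms] by (simp add: block_through_def i_def)
  then have "shift m r \<in> block ((j + m) mod 121) i"
    using shift_block[OF i] by (metis imageI)
  then have "i = line_index ((j + m) mod 121) (shift m r)"
    using mem_block_iff[OF shift_lt[OF assms] i] by blast
  then show ?thesis
    using shift_block[OF i] unfolding block_through_def i_def by simp
qed

definition uniquely_joined :: "nat \<Rightarrow> bool" where
  "uniquely_joined r \<longleftrightarrow> (\<forall>y<364. y \<noteq> r \<longrightarrow> (\<exists>!j. j < 121 \<and> y \<in> block_through j r))"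

lemma mem_block_through_shift_iff:
  assumes "r < 364" "y < 364"
  shows "y \<in> block_through k (shift m r) \<longleftrightarrow>
    shift (120 * m) y \<in> block_through ((k + 120 * m) mod 121) r"
proof -
  have image: "shift (120 * m) ` block_through k (shift m r) =
      block_through ((k + 120 * m) mod 121) r"
    using shift_block_through[OF shift_lt[OF assms(1)]] shift_inverse[OF assms(1)] by simp
  show ?thesis
  proof
    assume "y \<in> block_through k (shift m r)"
    then show "shift (120 * m) y \<in> block_through ((k + 120 * m) mod 121) r"
      unfolding image[symmetric] by (rule imageI)
  next
    assume "shift (120 * m) y \<in> block_through ((k + 120 * m) mod 121) r"
    then obtain z where z: "z \<in> block_through k (shift m r)" "shift (120 * m) y = shift (120 * m) z"
      unfolding image[symmetric] by blast
    then have "z = y"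
      using shift_inj block_through_lt[OF shift_lt[OF assms(1)] z(1)] assms(2) by blast
    then show "y \<in> block_through k (shift m r)"
      using z(1) by simp
  qed
qed

lemma add_mult_120_mod_121_eq_iff:
  fixes j k m :: nat
  assumes "j < 121" "k < 121"
  shows "(k + 120 * m) mod 121 = j \<longleftrightarrow> k = (j + m) mod 121"
proof
  assume "(k + 120 * m) mod 121 = j"
  then have "(j + m) mod 121 = ((k + 120 * m) mod 121 + m) mod 121"
    by simp
  also have "\<dots> = (k + 121 * m) mod 121"
    by (simp add: mod_add_left_eq)
  finally show "k = (j + m) mod 121"
    using assms(2) by simp
next
  assume "k = (j + m) mod 121"
  then have "(k + 120 * m) mod 121 = (j + 121 * m) mod 121"
    by (simp add: mod_add_left_eq)
  then show "(k + 120 * m) mod 121 = j"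
    using assms(1) by simp
qed

lemma uniquely_joined_shift:
  assumes r: "r < 364" and joined: "uniquely_joined r"
  shows "uniquely_joined (shift m r)"
  unfolding uniquely_joined_def
proof (intro allI impI)
  fix y
  assume y: "y < 364" "y \<noteq> shift m r"
  then have "shift (120 * m) y < 364" "shift (120 * m) y \<noteq> r"
    using r shift_inverse' shift_lt by metis+
  then obtain j where j: "j < 121" "shift (120 * m) y \<in> block_through j r"
    and uniq: "\<And>k. k < 121 \<Longrightarrow> shift (120 * m) y \<in> block_through k r \<Longrightarrow> k = j"
    using joined unfolding uniquely_joined_def by metis
  show "\<exists>!k. k < 121 \<and> y \<in> block_through k (shift m r)"
  proof (rule ex1I)
    have "((j + m) mod 121 + 120 * m) mod 121 = j"
      using add_mult_120_mod_121_eq_iff[of j "(j + m) mod 121" m] j(1) by simp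
    then show "(j + m) mod 121 < 121 \<and> y \<in> block_through ((j + m) mod 121) (shift m r)"
      using mem_block_through_shift_iff[OF r y(1)] j(2) by simp
  next
    fix k
    assume k: "k < 121 \<and> y \<in> block_through k (shift m r)"
    then have "(k + 120 * m) mod 121 = j"
      using mem_block_through_shift_iff[OF r y(1)] uniq by simp
    then show "k = (j + m) mod 121"
      using add_mult_120_mod_121_eq_iff[of j k m] j(1) k by simp
  qed
qed

definition labelled :: "nat \<Rightarrow> (nat \<Rightarrow> nat) \<Rightarrow> nat \<Rightarrow> nat \<Rightarrow> bool" where
  "labelled r label j y \<longleftrightarrow> y = r \<or> label y = j"

definition block_labelled :: "nat \<Rightarrow> (nat \<Rightarrow> nat) \<Rightarrow> nat \<Rightarrow> bool" where
  "block_labelled r label j \<longleftrightarrow>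
     list_all (labelled r label j) (map (shift j) (base_spread ! line_index j r))"

lemma uniquely_joined_if_labelled:
  assumes r: "r < 364" and labels: "all_below 121 (block_labelled r label)"
  shows "uniquely_joined r"
proof -
  define X where "X j = block_through j r - {r}" for j
  have label: "label y = j" if "j < 121" "y \<in> X j" for j y
    using labels that
    by (auto simp: X_def all_below_def block_labelled_def labelled_def list_all_iff
        block_through_def block_def)
  have card_X: "card (X j) = 3" for j
    using card_block[OF line_index_lt[OF r]] mem_block_through[OF r]
    by (simp add: X_def block_through_def)
  have "X j \<inter> X k = {}" if "j < 121" "k < 121" "j \<noteq> k" for j k
    using label[of j] label[of k] that by blast
  then have "card (\<Union>j<121. X j) = (\<Sum>j<121. card (X j))"
    by (intro card_UN_disjoint) (auto simp: X_def block_through_def block_def)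
  also have "\<dots> = card ({..<364} - {r})"
    using card_X r by simp
  finally have cover: "(\<Union>j<121. X j) = {..<364} - {r}"
    using block_through_lt[OF r] by (intro card_subset_eq) (auto simp: X_def)
  show ?thesis
    unfolding uniquely_joined_def
  proof (intro allI impI)
    fix y
    assume "y < 364" "y \<noteq> r"
    then obtain j where j: "j < 121" "y \<in> X j"
      using cover by blast
    show "\<exists>!j. j < 121 \<and> y \<in> block_through j r"
    proof (rule ex1I)
      show "j < 121 \<and> y \<in> block_through j r"
        using j by (simp add: X_def)
    next
      fix k
      assume "k < 121 \<and> y \<in> block_through k r"
      then show "k = j"
        using label j \<open>y \<noteq> r\<close> by (metis DiffI X_def singletonD)
    qed
  qed
qed

text \<open>For each of the orbit representatives \<open>0, 121, 122, 123\<close> of point numbers under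
  \<open>shift\<close>, and each other point \<open>y\<close>, the spread whose line through the representative
  contains \<open>y\<close>.\<close>

definition joining_spread_0 :: "nat \<Rightarrow> nat" where
  "joining_spread_0 y = (if y < 182 then (if y < 91 then (if y < 45 then (if y < 22 then (if y <
    11 then (if y < 5 then (if y < 2 then (if y < 1 then 0 else 102) else (if y < 3 then 116 else
    (if y < 4 then 64 else 104))) else (if y < 8 then (if y < 6 then 104 else (if y < 7 then 106
    else 14)) else (if y < 9 then 111 else (if y < 10 then 71 else 37)))) else (if y < 16 then (if y
    < 13 then (if y < 12 then 51 else 70) else (if y < 14 then 92 else (if y < 15 then 25 else 70)))
    else (if y < 19 then (if y < 17 then 14 else (if y < 18 then 51 else 76)) else (if y < 20 then
    75 else (if y < 21 then 103 else 42))))) else (if y < 33 then (if y < 27 then (if y < 24 then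
    (if y < 23 then 107 else 5) else (if y < 25 then 91 else (if y < 26 then 119 else 106))) else
    (if y < 30 then (if y < 28 then 92 else (if y < 29 then 31 else 89)) else (if y < 31 then 111
    else (if y < 32 then 46 else 96)))) else (if y < 39 then (if y < 36 then (if y < 34 then 32 else
    (if y < 35 then 42 else 2)) else (if y < 37 then 89 else (if y < 38 then 51 else 64))) else (if
    y < 42 then (if y < 40 then 34 else (if y < 41 then 54 else 79)) else (if y < 43 then 75 else
    (if y < 44 then 37 else 17)))))) else (if y < 68 then (if y < 56 then (if y < 50 then (if y < 47
    then (if y < 46 then 89 else 17) else (if y < 48 then 115 else (if y < 49 then 42 else 116)))
    else (if y < 53 then (if y < 51 then 70 else (if y < 52 then 32 else 41)) else (if y < 54 then
    102 else (if y < 55 then 107 else 46)))) else (if y < 62 then (if y < 59 then (if y < 57 then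
    119 else (if y < 58 then 104 else 34)) else (if y < 60 then 80 else (if y < 61 then 67 else
    37))) else (if y < 65 then (if y < 63 then 111 else (if y < 64 then 5 else 15)) else (if y < 66
    then 91 else (if y < 67 then 79 else 80))))) else (if y < 79 then (if y < 73 then (if y < 70
    then (if y < 69 then 15 else 15) else (if y < 71 then 67 else (if y < 72 then 45 else 31))) else
    (if y < 76 then (if y < 74 then 18 else (if y < 75 then 31 else 115)) else (if y < 77 then 6
    else (if y < 78 then 116 else 76)))) else (if y < 85 then (if y < 82 then (if y < 80 then 54
    else (if y < 81 then 119 else 34)) else (if y < 83 then 75 else (if y < 84 then 45 else 93)))
    else (if y < 88 then (if y < 86 then 71 else (if y < 87 then 45 else 25)) else (if y < 89 then
    76 else (if y < 90 then 80 else 91))))))) else (if y < 136 then (if y < 113 then (if y < 102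
    then (if y < 96 then (if y < 93 then (if y < 92 then 96 else 14) else (if y < 94 then 17 else
    (if y < 95 then 18 else 93))) else (if y < 99 then (if y < 97 then 46 else (if y < 98 then 79
    else 54)) else (if y < 100 then 96 else (if y < 101 then 92 else 93)))) else (if y < 107 then
    (if y < 104 then (if y < 103 then 5 else 67) else (if y < 105 then 103 else (if y < 106 then 6
    else 2))) else (if y < 110 then (if y < 108 then 18 else (if y < 109 then 25 else 64)) else (if
    y < 111 then 106 else (if y < 112 then 32 else 6))))) else (if y < 124 then (if y < 118 then (if
    y < 115 then (if y < 114 then 107 else 71) else (if y < 116 then 103 else (if y < 117 then 41
    else 102))) else (if y < 121 then (if y < 119 then 2 else (if y < 120 then 115 else 41)) else
    (if y < 122 then 0 else (if y < 123 then 0 else 50)))) else (if y < 130 then (if y < 127 then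
    (if y < 125 then 3 else (if y < 126 then 29 else 24)) else (if y < 128 then 24 else (if y < 129
    then 9 else 7))) else (if y < 133 then (if y < 131 then 98 else (if y < 132 then 87 else 74))
    else (if y < 134 then 82 else (if y < 135 then 72 else 19)))))) else (if y < 159 then (if y <
    147 then (if y < 141 then (if y < 138 then (if y < 137 then 99 else 72) else (if y < 139 then 16
    else (if y < 140 then 77 else 27))) else (if y < 144 then (if y < 142 then 8 else (if y < 143
    then 59 else 21)) else (if y < 145 then 81 else (if y < 146 then 63 else 52)))) else (if y < 153
    then (if y < 150 then (if y < 148 then 58 else (if y < 149 then 30 else 19)) else (if y < 151
    then 62 else (if y < 152 then 95 else 101))) else (if y < 156 then (if y < 154 then 22 else (if
    y < 155 then 12 else 4)) else (if y < 157 then 21 else (if y < 158 then 97 else 95))))) else (if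
    y < 170 then (if y < 164 then (if y < 161 then (if y < 160 then 77 else 29) else (if y < 162
    then 57 else (if y < 163 then 39 else 84))) else (if y < 167 then (if y < 165 then 55 else (if y
    < 166 then 74 else 66)) else (if y < 168 then 95 else (if y < 169 then 108 else 53)))) else (if
    y < 176 then (if y < 173 then (if y < 171 then 48 else (if y < 172 then 3 else 11)) else (if y <
    174 then 110 else (if y < 175 then 117 else 40))) else (if y < 179 then (if y < 177 then 81 else
    (if y < 178 then 36 else 20)) else (if y < 180 then 24 else (if y < 181 then 57 else 100))))))))
    else (if y < 273 then (if y < 227 then (if y < 204 then (if y < 193 then (if y < 187 then (if y
    < 184 then (if y < 183 then 56 else 74) else (if y < 185 then 98 else (if y < 186 then 63 else
    68))) else (if y < 190 then (if y < 188 then 61 else (if y < 189 then 1 else 100)) else (if y <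
    191 then 69 else (if y < 192 then 68 else 56)))) else (if y < 198 then (if y < 195 then (if y <
    194 then 86 else 35) else (if y < 196 then 26 else (if y < 197 then 35 else 53))) else (if y <
    201 then (if y < 199 then 85 else (if y < 200 then 10 else 90)) else (if y < 202 then 78 else
    (if y < 203 then 20 else 57))))) else (if y < 215 then (if y < 209 then (if y < 206 then (if y <
    205 then 8 else 83) else (if y < 207 then 65 else (if y < 208 then 87 else 86))) else (if y <
    212 then (if y < 210 then 43 else (if y < 211 then 27 else 100)) else (if y < 213 then 61 else
    (if y < 214 then 88 else 7)))) else (if y < 221 then (if y < 218 then (if y < 216 then 66 else
    (if y < 217 then 13 else 65)) else (if y < 219 then 36 else (if y < 220 then 1 else 39))) else
    (if y < 224 then (if y < 222 then 12 else (if y < 223 then 19 else 65)) else (if y < 225 then 63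
    else (if y < 226 then 114 else 59)))))) else (if y < 250 then (if y < 238 then (if y < 232 then
    (if y < 229 then (if y < 228 then 49 else 109) else (if y < 230 then 26 else (if y < 231 then 43
    else 29))) else (if y < 235 then (if y < 233 then 9 else (if y < 234 then 110 else 85)) else (if
    y < 236 then 81 else (if y < 237 then 87 else 38)))) else (if y < 244 then (if y < 241 then (if
    y < 239 then 117 else (if y < 240 then 50 else 109)) else (if y < 242 then 53 else (if y < 243
    then 117 else 0))) else (if y < 247 then (if y < 245 then 40 else (if y < 246 then 10 else 120))
    else (if y < 248 then 44 else (if y < 249 then 44 else 30))))) else (if y < 261 then (if y < 255
    then (if y < 252 then (if y < 251 then 16 else 101) else (if y < 253 then 118 else (if y < 254
    then 73 else 77))) else (if y < 258 then (if y < 256 then 11 else (if y < 257 then 112 else 43))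
    else (if y < 259 then 11 else (if y < 260 then 7 else 82)))) else (if y < 267 then (if y < 264
    then (if y < 262 then 90 else (if y < 263 then 55 else 38)) else (if y < 265 then 48 else (if y
    < 266 then 28 else 23))) else (if y < 270 then (if y < 268 then 61 else (if y < 269 then 20 else
    9)) else (if y < 271 then 112 else (if y < 272 then 35 else 33))))))) else (if y < 318 then (if
    y < 295 then (if y < 284 then (if y < 278 then (if y < 275 then (if y < 274 then 98 else 36)
    else (if y < 276 then 88 else (if y < 277 then 110 else 48))) else (if y < 281 then (if y < 279
    then 109 else (if y < 280 then 33 else 82)) else (if y < 282 then 120 else (if y < 283 then 94
    else 78)))) else (if y < 289 then (if y < 286 then (if y < 285 then 1 else 8) else (if y < 287
    then 73 else (if y < 288 then 108 else 33))) else (if y < 292 then (if y < 290 then 66 else (if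
    y < 291 then 60 else 21)) else (if y < 293 then 10 else (if y < 294 then 72 else 4))))) else (if
    y < 306 then (if y < 300 then (if y < 297 then (if y < 296 then 113 else 50) else (if y < 298
    then 28 else (if y < 299 then 22 else 58))) else (if y < 303 then (if y < 301 then 44 else (if y
    < 302 then 94 else 47)) else (if y < 304 then 114 else (if y < 305 then 73 else 101)))) else (if
    y < 312 then (if y < 309 then (if y < 307 then 23 else (if y < 308 then 69 else 52)) else (if y
    < 310 then 84 else (if y < 311 then 47 else 68))) else (if y < 315 then (if y < 313 then 69 else
    (if y < 314 then 114 else 83)) else (if y < 316 then 62 else (if y < 317 then 13 else 62))))))
    else (if y < 341 then (if y < 329 then (if y < 323 then (if y < 320 then (if y < 319 then 60
    else 49) else (if y < 321 then 3 else (if y < 322 then 27 else 39))) else (if y < 326 then (if y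
    < 324 then 58 else (if y < 325 then 94 else 55)) else (if y < 327 then 86 else (if y < 328 then
    105 else 118)))) else (if y < 335 then (if y < 332 then (if y < 330 then 83 else (if y < 331
    then 99 else 90)) else (if y < 333 then 47 else (if y < 334 then 52 else 12))) else (if y < 338
    then (if y < 336 then 16 else (if y < 337 then 108 else 26)) else (if y < 339 then 105 else (if
    y < 340 then 22 else 84))))) else (if y < 352 then (if y < 346 then (if y < 343 then (if y < 342
    then 78 else 88) else (if y < 344 then 112 else (if y < 345 then 105 else 23))) else (if y < 349
    then (if y < 347 then 56 else (if y < 348 then 38 else 85)) else (if y < 350 then 97 else (if y
    < 351 then 13 else 99)))) else (if y < 358 then (if y < 355 then (if y < 353 then 120 else (if y
    < 354 then 30 else 4)) else (if y < 356 then 49 else (if y < 357 then 28 else 118))) else (if y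
    < 361 then (if y < 359 then 59 else (if y < 360 then 113 else 40)) else (if y < 362 then 97 else
    (if y < 363 then 60 else 113)))))))))"

definition joining_spread_121 :: "nat \<Rightarrow> nat" where
  "joining_spread_121 y = (if y < 182 then (if y < 91 then (if y < 45 then (if y < 22 then (if y <
    11 then (if y < 5 then (if y < 2 then (if y < 1 then 0 else 61) else (if y < 3 then 1 else (if y
    < 4 then 62 else 2))) else (if y < 8 then (if y < 6 then 63 else (if y < 7 then 3 else 64)) else
    (if y < 9 then 4 else (if y < 10 then 65 else 5)))) else (if y < 16 then (if y < 13 then (if y <
    12 then 66 else 6) else (if y < 14 then 67 else (if y < 15 then 7 else 68))) else (if y < 19
    then (if y < 17 then 8 else (if y < 18 then 69 else 9)) else (if y < 20 then 70 else (if y < 21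
    then 10 else 71))))) else (if y < 33 then (if y < 27 then (if y < 24 then (if y < 23 then 11
    else 72) else (if y < 25 then 12 else (if y < 26 then 73 else 13))) else (if y < 30 then (if y <
    28 then 74 else (if y < 29 then 14 else 75)) else (if y < 31 then 15 else (if y < 32 then 76
    else 16)))) else (if y < 39 then (if y < 36 then (if y < 34 then 77 else (if y < 35 then 17 else
    78)) else (if y < 37 then 18 else (if y < 38 then 79 else 19))) else (if y < 42 then (if y < 40
    then 80 else (if y < 41 then 20 else 81)) else (if y < 43 then 21 else (if y < 44 then 82 else
    22)))))) else (if y < 68 then (if y < 56 then (if y < 50 then (if y < 47 then (if y < 46 then 83
    else 23) else (if y < 48 then 84 else (if y < 49 then 24 else 85))) else (if y < 53 then (if y <
    51 then 25 else (if y < 52 then 86 else 26)) else (if y < 54 then 87 else (if y < 55 then 27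
    else 88)))) else (if y < 62 then (if y < 59 then (if y < 57 then 28 else (if y < 58 then 89 else
    29)) else (if y < 60 then 90 else (if y < 61 then 30 else 91))) else (if y < 65 then (if y < 63
    then 31 else (if y < 64 then 92 else 32)) else (if y < 66 then 93 else (if y < 67 then 33 else
    94))))) else (if y < 79 then (if y < 73 then (if y < 70 then (if y < 69 then 34 else 95) else
    (if y < 71 then 35 else (if y < 72 then 96 else 36))) else (if y < 76 then (if y < 74 then 97
    else (if y < 75 then 37 else 98)) else (if y < 77 then 38 else (if y < 78 then 99 else 39))))
    else (if y < 85 then (if y < 82 then (if y < 80 then 100 else (if y < 81 then 40 else 101)) else
    (if y < 83 then 41 else (if y < 84 then 102 else 42))) else (if y < 88 then (if y < 86 then 103
    else (if y < 87 then 43 else 104)) else (if y < 89 then 44 else (if y < 90 then 105 else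
    45))))))) else (if y < 136 then (if y < 113 then (if y < 102 then (if y < 96 then (if y < 93
    then (if y < 92 then 106 else 46) else (if y < 94 then 107 else (if y < 95 then 47 else 108)))
    else (if y < 99 then (if y < 97 then 48 else (if y < 98 then 109 else 49)) else (if y < 100 then
    110 else (if y < 101 then 50 else 111)))) else (if y < 107 then (if y < 104 then (if y < 103
    then 51 else 112) else (if y < 105 then 52 else (if y < 106 then 113 else 53))) else (if y < 110
    then (if y < 108 then 114 else (if y < 109 then 54 else 115)) else (if y < 111 then 55 else (if
    y < 112 then 116 else 56))))) else (if y < 124 then (if y < 118 then (if y < 115 then (if y <
    114 then 117 else 57) else (if y < 116 then 118 else (if y < 117 then 58 else 119))) else (if y
    < 121 then (if y < 119 then 59 else (if y < 120 then 120 else 60)) else (if y < 122 then 0 else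
    (if y < 123 then 0 else 61)))) else (if y < 130 then (if y < 127 then (if y < 125 then 1 else
    (if y < 126 then 62 else 2)) else (if y < 128 then 63 else (if y < 129 then 3 else 64))) else
    (if y < 133 then (if y < 131 then 4 else (if y < 132 then 65 else 5)) else (if y < 134 then 66
    else (if y < 135 then 6 else 67)))))) else (if y < 159 then (if y < 147 then (if y < 141 then
    (if y < 138 then (if y < 137 then 7 else 68) else (if y < 139 then 8 else (if y < 140 then 69
    else 9))) else (if y < 144 then (if y < 142 then 70 else (if y < 143 then 10 else 71)) else (if
    y < 145 then 11 else (if y < 146 then 72 else 12)))) else (if y < 153 then (if y < 150 then (if
    y < 148 then 73 else (if y < 149 then 13 else 74)) else (if y < 151 then 14 else (if y < 152
    then 75 else 15))) else (if y < 156 then (if y < 154 then 76 else (if y < 155 then 16 else 77))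
    else (if y < 157 then 17 else (if y < 158 then 78 else 18))))) else (if y < 170 then (if y < 164
    then (if y < 161 then (if y < 160 then 79 else 19) else (if y < 162 then 80 else (if y < 163
    then 20 else 81))) else (if y < 167 then (if y < 165 then 21 else (if y < 166 then 82 else 22))
    else (if y < 168 then 83 else (if y < 169 then 23 else 84)))) else (if y < 176 then (if y < 173
    then (if y < 171 then 24 else (if y < 172 then 85 else 25)) else (if y < 174 then 86 else (if y
    < 175 then 26 else 87))) else (if y < 179 then (if y < 177 then 27 else (if y < 178 then 88 else
    28)) else (if y < 180 then 89 else (if y < 181 then 29 else 90)))))))) else (if y < 273 then (if
    y < 227 then (if y < 204 then (if y < 193 then (if y < 187 then (if y < 184 then (if y < 183
    then 30 else 91) else (if y < 185 then 31 else (if y < 186 then 92 else 32))) else (if y < 190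
    then (if y < 188 then 93 else (if y < 189 then 33 else 94)) else (if y < 191 then 34 else (if y
    < 192 then 95 else 35)))) else (if y < 198 then (if y < 195 then (if y < 194 then 96 else 36)
    else (if y < 196 then 97 else (if y < 197 then 37 else 98))) else (if y < 201 then (if y < 199
    then 38 else (if y < 200 then 99 else 39)) else (if y < 202 then 100 else (if y < 203 then 40
    else 101))))) else (if y < 215 then (if y < 209 then (if y < 206 then (if y < 205 then 41 else
    102) else (if y < 207 then 42 else (if y < 208 then 103 else 43))) else (if y < 212 then (if y <
    210 then 104 else (if y < 211 then 44 else 105)) else (if y < 213 then 45 else (if y < 214 then
    106 else 46)))) else (if y < 221 then (if y < 218 then (if y < 216 then 107 else (if y < 217
    then 47 else 108)) else (if y < 219 then 48 else (if y < 220 then 109 else 49))) else (if y <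
    224 then (if y < 222 then 110 else (if y < 223 then 50 else 111)) else (if y < 225 then 51 else
    (if y < 226 then 112 else 52)))))) else (if y < 250 then (if y < 238 then (if y < 232 then (if y
    < 229 then (if y < 228 then 113 else 53) else (if y < 230 then 114 else (if y < 231 then 54 else
    115))) else (if y < 235 then (if y < 233 then 55 else (if y < 234 then 116 else 56)) else (if y
    < 236 then 117 else (if y < 237 then 57 else 118)))) else (if y < 244 then (if y < 241 then (if
    y < 239 then 58 else (if y < 240 then 119 else 59)) else (if y < 242 then 120 else (if y < 243
    then 60 else 0))) else (if y < 247 then (if y < 245 then 61 else (if y < 246 then 1 else 62))
    else (if y < 248 then 2 else (if y < 249 then 63 else 3))))) else (if y < 261 then (if y < 255
    then (if y < 252 then (if y < 251 then 64 else 4) else (if y < 253 then 65 else (if y < 254 then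
    5 else 66))) else (if y < 258 then (if y < 256 then 6 else (if y < 257 then 67 else 7)) else (if
    y < 259 then 68 else (if y < 260 then 8 else 69)))) else (if y < 267 then (if y < 264 then (if y
    < 262 then 9 else (if y < 263 then 70 else 10)) else (if y < 265 then 71 else (if y < 266 then
    11 else 72))) else (if y < 270 then (if y < 268 then 12 else (if y < 269 then 73 else 13)) else
    (if y < 271 then 74 else (if y < 272 then 14 else 75))))))) else (if y < 318 then (if y < 295
    then (if y < 284 then (if y < 278 then (if y < 275 then (if y < 274 then 15 else 76) else (if y
    < 276 then 16 else (if y < 277 then 77 else 17))) else (if y < 281 then (if y < 279 then 78 else
    (if y < 280 then 18 else 79)) else (if y < 282 then 19 else (if y < 283 then 80 else 20)))) else
    (if y < 289 then (if y < 286 then (if y < 285 then 81 else 21) else (if y < 287 then 82 else (if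
    y < 288 then 22 else 83))) else (if y < 292 then (if y < 290 then 23 else (if y < 291 then 84
    else 24)) else (if y < 293 then 85 else (if y < 294 then 25 else 86))))) else (if y < 306 then
    (if y < 300 then (if y < 297 then (if y < 296 then 26 else 87) else (if y < 298 then 27 else (if
    y < 299 then 88 else 28))) else (if y < 303 then (if y < 301 then 89 else (if y < 302 then 29
    else 90)) else (if y < 304 then 30 else (if y < 305 then 91 else 31)))) else (if y < 312 then
    (if y < 309 then (if y < 307 then 92 else (if y < 308 then 32 else 93)) else (if y < 310 then 33
    else (if y < 311 then 94 else 34))) else (if y < 315 then (if y < 313 then 95 else (if y < 314
    then 35 else 96)) else (if y < 316 then 36 else (if y < 317 then 97 else 37)))))) else (if y <
    341 then (if y < 329 then (if y < 323 then (if y < 320 then (if y < 319 then 98 else 38) else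
    (if y < 321 then 99 else (if y < 322 then 39 else 100))) else (if y < 326 then (if y < 324 then
    40 else (if y < 325 then 101 else 41)) else (if y < 327 then 102 else (if y < 328 then 42 else
    103)))) else (if y < 335 then (if y < 332 then (if y < 330 then 43 else (if y < 331 then 104
    else 44)) else (if y < 333 then 105 else (if y < 334 then 45 else 106))) else (if y < 338 then
    (if y < 336 then 46 else (if y < 337 then 107 else 47)) else (if y < 339 then 108 else (if y <
    340 then 48 else 109))))) else (if y < 352 then (if y < 346 then (if y < 343 then (if y < 342
    then 49 else 110) else (if y < 344 then 50 else (if y < 345 then 111 else 51))) else (if y < 349
    then (if y < 347 then 112 else (if y < 348 then 52 else 113)) else (if y < 350 then 53 else (if
    y < 351 then 114 else 54)))) else (if y < 358 then (if y < 355 then (if y < 353 then 115 else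
    (if y < 354 then 55 else 116)) else (if y < 356 then 56 else (if y < 357 then 117 else 57)))
    else (if y < 361 then (if y < 359 then 118 else (if y < 360 then 58 else 119)) else (if y < 362
    then 59 else (if y < 363 then 120 else 60)))))))))"

definition joining_spread_122 :: "nat \<Rightarrow> nat" where
  "joining_spread_122 y = (if y < 182 then (if y < 91 then (if y < 45 then (if y < 22 then (if y <
    11 then (if y < 5 then (if y < 2 then (if y < 1 then 0 else 57) else (if y < 3 then 61 else (if
    y < 4 then 50 else 42))) else (if y < 8 then (if y < 6 then 59 else (if y < 7 then 62 else 30))
    else (if y < 9 then 32 else (if y < 10 then 29 else 9)))) else (if y < 16 then (if y < 13 then
    (if y < 12 then 75 else 5) else (if y < 14 then 110 else (if y < 15 then 20 else 56))) else (if
    y < 19 then (if y < 17 then 93 else (if y < 18 then 7 else 65)) else (if y < 20 then 12 else (if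
    y < 21 then 115 else 90))))) else (if y < 33 then (if y < 27 then (if y < 24 then (if y < 23
    then 99 else 111) else (if y < 25 then 96 else (if y < 26 then 109 else 118))) else (if y < 30
    then (if y < 28 then 87 else (if y < 29 then 1 else 82)) else (if y < 31 then 27 else (if y < 32
    then 16 else 63)))) else (if y < 39 then (if y < 36 then (if y < 34 then 104 else (if y < 35
    then 116 else 43)) else (if y < 37 then 15 else (if y < 38 then 23 else 105))) else (if y < 42
    then (if y < 40 then 88 else (if y < 41 then 114 else 101)) else (if y < 43 then 60 else (if y <
    44 then 51 else 25)))))) else (if y < 68 then (if y < 56 then (if y < 50 then (if y < 47 then
    (if y < 46 then 47 else 83) else (if y < 48 then 119 else (if y < 49 then 37 else 120))) else
    (if y < 53 then (if y < 51 then 108 else (if y < 52 then 21 else 95)) else (if y < 54 then 35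
    else (if y < 55 then 74 else 89)))) else (if y < 62 then (if y < 59 then (if y < 57 then 80 else
    (if y < 58 then 36 else 52)) else (if y < 60 then 67 else (if y < 61 then 103 else 26))) else
    (if y < 65 then (if y < 63 then 78 else (if y < 64 then 28 else 76)) else (if y < 66 then 113
    else (if y < 67 then 55 else 54))))) else (if y < 79 then (if y < 73 then (if y < 70 then (if y
    < 69 then 84 else 91) else (if y < 71 then 39 else (if y < 72 then 107 else 46))) else (if y <
    76 then (if y < 74 then 24 else (if y < 75 then 97 else 85)) else (if y < 77 then 71 else (if y
    < 78 then 44 else 112)))) else (if y < 85 then (if y < 82 then (if y < 80 then 34 else (if y <
    81 then 41 else 19)) else (if y < 83 then 14 else (if y < 84 then 10 else 3))) else (if y < 88
    then (if y < 86 then 77 else (if y < 87 then 31 else 4)) else (if y < 89 then 33 else (if y < 90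
    then 117 else 81))))))) else (if y < 136 then (if y < 113 then (if y < 102 then (if y < 96 then
    (if y < 93 then (if y < 92 then 86 else 79) else (if y < 94 then 48 else (if y < 95 then 38 else
    17))) else (if y < 99 then (if y < 97 then 68 else (if y < 98 then 40 else 72)) else (if y < 100
    then 70 else (if y < 101 then 98 else 49)))) else (if y < 107 then (if y < 104 then (if y < 103
    then 106 else 18) else (if y < 105 then 13 else (if y < 106 then 8 else 64))) else (if y < 110
    then (if y < 108 then 92 else (if y < 109 then 45 else 66)) else (if y < 111 then 11 else (if y
    < 112 then 69 else 53))))) else (if y < 124 then (if y < 118 then (if y < 115 then (if y < 114
    then 94 else 73) else (if y < 116 then 6 else (if y < 117 then 102 else 22))) else (if y < 121
    then (if y < 119 then 58 else (if y < 120 then 2 else 100)) else (if y < 122 then 0 else (if y <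
    123 then 0 else 22)))) else (if y < 130 then (if y < 127 then (if y < 125 then 120 else (if y <
    126 then 66 else 59)) else (if y < 128 then 36 else (if y < 129 then 118 else 79))) else (if y <
    133 then (if y < 131 then 78 else (if y < 132 then 77 else 26)) else (if y < 134 then 23 else
    (if y < 135 then 56 else 98)))))) else (if y < 159 then (if y < 147 then (if y < 141 then (if y
    < 138 then (if y < 137 then 45 else 108) else (if y < 139 then 79 else (if y < 140 then 23 else
    112))) else (if y < 144 then (if y < 142 then 14 else (if y < 143 then 13 else 116)) else (if y
    < 145 then 74 else (if y < 146 then 28 else 113)))) else (if y < 153 then (if y < 150 then (if y
    < 148 then 80 else (if y < 149 then 62 else 110)) else (if y < 151 then 97 else (if y < 152 then
    15 else 78))) else (if y < 156 then (if y < 154 then 89 else (if y < 155 then 70 else 69)) else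
    (if y < 157 then 37 else (if y < 158 then 58 else 47))))) else (if y < 170 then (if y < 164 then
    (if y < 161 then (if y < 160 then 75 else 50) else (if y < 162 then 52 else (if y < 163 then 72
    else 55))) else (if y < 167 then (if y < 165 then 14 else (if y < 166 then 9 else 83)) else (if
    y < 168 then 82 else (if y < 169 then 25 else 2)))) else (if y < 176 then (if y < 173 then (if y
    < 171 then 116 else (if y < 172 then 44 else 56)) else (if y < 174 then 69 else (if y < 175 then
    102 else 22))) else (if y < 179 then (if y < 177 then 94 else (if y < 178 then 16 else 109))
    else (if y < 180 then 42 else (if y < 181 then 19 else 54)))))))) else (if y < 273 then (if y <
    227 then (if y < 204 then (if y < 193 then (if y < 187 then (if y < 184 then (if y < 183 then 39
    else 51) else (if y < 185 then 27 else (if y < 186 then 106 else 91))) else (if y < 190 then (if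
    y < 188 then 96 else (if y < 189 then 101 else 117)) else (if y < 191 then 91 else (if y < 192
    then 84 else 18)))) else (if y < 198 then (if y < 195 then (if y < 194 then 10 else 97) else (if
    y < 196 then 38 else (if y < 197 then 1 else 119))) else (if y < 201 then (if y < 199 then 53
    else (if y < 200 then 120 else 65)) else (if y < 202 then 72 else (if y < 203 then 80 else
    88))))) else (if y < 215 then (if y < 209 then (if y < 206 then (if y < 205 then 60 else 107)
    else (if y < 207 then 49 else (if y < 208 then 73 else 107))) else (if y < 212 then (if y < 210
    then 45 else (if y < 211 then 65 else 67)) else (if y < 213 then 113 else (if y < 214 then 70
    else 93)))) else (if y < 221 then (if y < 218 then (if y < 216 then 25 else (if y < 217 then 24
    else 3)) else (if y < 219 then 89 else (if y < 220 then 55 else 34))) else (if y < 224 then (if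
    y < 222 then 86 else (if y < 223 then 87 else 17)) else (if y < 225 then 111 else (if y < 226
    then 39 else 6)))))) else (if y < 250 then (if y < 238 then (if y < 232 then (if y < 229 then
    (if y < 228 then 53 else 58) else (if y < 230 then 24 else (if y < 231 then 20 else 105))) else
    (if y < 235 then (if y < 233 then 62 else (if y < 234 then 104 else 8)) else (if y < 236 then 99
    else (if y < 237 then 29 else 13)))) else (if y < 244 then (if y < 241 then (if y < 239 then 100
    else (if y < 240 then 35 else 43)) else (if y < 242 then 85 else (if y < 243 then 95 else 0)))
    else (if y < 247 then (if y < 245 then 35 else (if y < 246 then 44 else 105)) else (if y < 248
    then 36 else (if y < 249 then 42 else 11))))) else (if y < 261 then (if y < 255 then (if y < 252
    then (if y < 251 then 93 else 27) else (if y < 253 then 73 else (if y < 254 then 51 else 7)))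
    else (if y < 258 then (if y < 256 then 108 else (if y < 257 then 87 else 4)) else (if y < 259
    then 5 else (if y < 260 then 30 else 75)))) else (if y < 267 then (if y < 264 then (if y < 262
    then 33 else (if y < 263 then 60 else 6)) else (if y < 265 then 37 else (if y < 266 then 94 else
    106))) else (if y < 270 then (if y < 268 then 81 else (if y < 269 then 41 else 11)) else (if y <
    271 then 98 else (if y < 272 then 46 else 47))))))) else (if y < 318 then (if y < 295 then (if y
    < 284 then (if y < 278 then (if y < 275 then (if y < 274 then 32 else 68) else (if y < 276 then
    86 else (if y < 277 then 21 else 90))) else (if y < 281 then (if y < 279 then 64 else (if y <
    280 then 82 else 7)) else (if y < 282 then 66 else (if y < 283 then 19 else 34)))) else (if y <
    289 then (if y < 286 then (if y < 285 then 40 else 12) else (if y < 287 then 26 else (if y < 288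
    then 48 else 15))) else (if y < 292 then (if y < 290 then 48 else (if y < 291 then 85 else 90))
    else (if y < 293 then 61 else (if y < 294 then 5 else 104))))) else (if y < 306 then (if y < 300
    then (if y < 297 then (if y < 296 then 100 else 57) else (if y < 298 then 99 else (if y < 299
    then 68 else 41))) else (if y < 303 then (if y < 301 then 59 else (if y < 302 then 88 else 117))
    else (if y < 304 then 18 else (if y < 305 then 9 else 32)))) else (if y < 312 then (if y < 309
    then (if y < 307 then 111 else (if y < 308 then 84 else 81)) else (if y < 310 then 40 else (if y
    < 311 then 67 else 76))) else (if y < 315 then (if y < 313 then 76 else (if y < 314 then 103
    else 31)) else (if y < 316 then 1 else (if y < 317 then 92 else 46)))))) else (if y < 341 then
    (if y < 329 then (if y < 323 then (if y < 320 then (if y < 319 then 2 else 8) else (if y < 321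
    then 61 else (if y < 322 then 33 else 114))) else (if y < 326 then (if y < 324 then 109 else (if
    y < 325 then 52 else 12)) else (if y < 327 then 31 else (if y < 328 then 17 else 29)))) else (if
    y < 335 then (if y < 332 then (if y < 330 then 10 else (if y < 331 then 20 else 112)) else (if y
    < 333 then 54 else (if y < 334 then 96 else 63))) else (if y < 338 then (if y < 336 then 30 else
    (if y < 337 then 83 else 92)) else (if y < 339 then 49 else (if y < 340 then 16 else 101)))))
    else (if y < 352 then (if y < 346 then (if y < 343 then (if y < 342 then 114 else 63) else (if y
    < 344 then 110 else (if y < 345 then 3 else 28))) else (if y < 349 then (if y < 347 then 103
    else (if y < 348 then 115 else 71)) else (if y < 350 then 43 else (if y < 351 then 38 else 4))))
    else (if y < 358 then (if y < 355 then (if y < 353 then 50 else (if y < 354 then 118 else 21))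
    else (if y < 356 then 71 else (if y < 357 then 74 else 77))) else (if y < 361 then (if y < 359
    then 115 else (if y < 360 then 95 else 57)) else (if y < 362 then 64 else (if y < 363 then 119
    else 102)))))))))"

definition joining_spread_123 :: "nat \<Rightarrow> nat" where
  "joining_spread_123 y = (if y < 182 then (if y < 91 then (if y < 45 then (if y < 22 then (if y <
    11 then (if y < 5 then (if y < 2 then (if y < 1 then 50 else 61) else (if y < 3 then 114 else
    (if y < 4 then 115 else 99))) else (if y < 8 then (if y < 6 then 113 else (if y < 7 then 116
    else 102)) else (if y < 9 then 1 else (if y < 10 then 25 else 54)))) else (if y < 16 then (if y
    < 13 then (if y < 12 then 55 else 36) else (if y < 14 then 96 else (if y < 15 then 106 else
    94))) else (if y < 19 then (if y < 17 then 105 else (if y < 18 then 118 else 47)) else (if y <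
    20 then 63 else (if y < 21 then 33 else 15))))) else (if y < 33 then (if y < 27 then (if y < 24
    then (if y < 23 then 2 else 84) else (if y < 25 then 90 else (if y < 26 then 74 else 35))) else
    (if y < 30 then (if y < 28 then 18 else (if y < 29 then 40 else 20)) else (if y < 31 then 31
    else (if y < 32 then 43 else 68)))) else (if y < 39 then (if y < 36 then (if y < 34 then 56 else
    (if y < 35 then 107 else 0)) else (if y < 37 then 101 else (if y < 38 then 45 else 3))) else (if
    y < 42 then (if y < 40 then 42 else (if y < 41 then 75 else 17)) else (if y < 43 then 79 else
    (if y < 44 then 39 else 49)))))) else (if y < 68 then (if y < 56 then (if y < 50 then (if y < 47
    then (if y < 46 then 93 else 72) else (if y < 48 then 16 else (if y < 49 then 86 else 111)))
    else (if y < 53 then (if y < 51 then 87 else (if y < 52 then 51 else 19)) else (if y < 54 then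
    34 else (if y < 55 then 95 else 67)))) else (if y < 62 then (if y < 59 then (if y < 57 then 112
    else (if y < 58 then 29 else 98)) else (if y < 60 then 32 else (if y < 61 then 10 else 44)))
    else (if y < 65 then (if y < 63 then 24 else (if y < 64 then 71 else 5)) else (if y < 66 then
    117 else (if y < 67 then 91 else 9))))) else (if y < 79 then (if y < 73 then (if y < 70 then (if
    y < 69 then 62 else 14) else (if y < 71 then 27 else (if y < 72 then 85 else 108))) else (if y <
    76 then (if y < 74 then 100 else (if y < 75 then 58 else 30)) else (if y < 77 then 104 else (if
    y < 78 then 73 else 26)))) else (if y < 85 then (if y < 82 then (if y < 80 then 53 else (if y <
    81 then 48 else 64)) else (if y < 83 then 119 else (if y < 84 then 38 else 41))) else (if y < 88
    then (if y < 86 then 59 else (if y < 87 then 76 else 80)) else (if y < 89 then 92 else (if y <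
    90 then 109 else 12))))))) else (if y < 136 then (if y < 113 then (if y < 102 then (if y < 96
    then (if y < 93 then (if y < 92 then 7 else 23) else (if y < 94 then 81 else (if y < 95 then 82
    else 6))) else (if y < 99 then (if y < 97 then 57 else (if y < 98 then 46 else 110)) else (if y
    < 100 then 52 else (if y < 101 then 78 else 11)))) else (if y < 107 then (if y < 104 then (if y
    < 103 then 89 else 120) else (if y < 105 then 21 else (if y < 106 then 69 else 60))) else (if y
    < 110 then (if y < 108 then 65 else (if y < 109 then 97 else 13)) else (if y < 111 then 66 else
    (if y < 112 then 77 else 8))))) else (if y < 124 then (if y < 118 then (if y < 115 then (if y <
    114 then 83 else 37) else (if y < 116 then 4 else (if y < 117 then 88 else 22))) else (if y <
    121 then (if y < 119 then 103 else (if y < 120 then 28 else 70)) else (if y < 122 then 61 else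
    (if y < 123 then 22 else 0)))) else (if y < 130 then (if y < 127 then (if y < 125 then 103 else
    (if y < 126 then 87 else 66)) else (if y < 128 then 116 else (if y < 129 then 98 else 18))) else
    (if y < 133 then (if y < 131 then 81 else (if y < 132 then 71 else 76)) else (if y < 134 then 24
    else (if y < 135 then 3 else 105)))))) else (if y < 159 then (if y < 147 then (if y < 141 then
    (if y < 138 then (if y < 137 then 11 else 13) else (if y < 139 then 51 else (if y < 140 then 81
    else 3))) else (if y < 144 then (if y < 142 then 53 else (if y < 143 then 38 else 69)) else (if
    y < 145 then 0 else (if y < 146 then 67 else 5)))) else (if y < 153 then (if y < 150 then (if y
    < 148 then 91 else (if y < 149 then 29 else 102)) else (if y < 151 then 106 else (if y < 152
    then 30 else 45))) else (if y < 156 then (if y < 154 then 71 else (if y < 155 then 112 else 78))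
    else (if y < 157 then 8 else (if y < 158 then 111 else 28))))) else (if y < 170 then (if y < 164
    then (if y < 161 then (if y < 160 then 72 else 36) else (if y < 162 then 99 else (if y < 163
    then 32 else 52))) else (if y < 167 then (if y < 165 then 9 else (if y < 166 then 38 else 55))
    else (if y < 168 then 16 else (if y < 169 then 31 else 93)))) else (if y < 176 then (if y < 173
    then (if y < 171 then 70 else (if y < 172 then 0 else 26)) else (if y < 174 then 105 else (if y
    < 175 then 8 else 22))) else (if y < 179 then (if y < 177 then 103 else (if y < 178 then 37 else
    68)) else (if y < 180 then 35 else (if y < 181 then 113 else 119)))))))) else (if y < 273 then
    (if y < 227 then (if y < 204 then (if y < 193 then (if y < 187 then (if y < 184 then (if y < 183
    then 62 else 85) else (if y < 185 then 49 else (if y < 186 then 43 else 120))) else (if y < 190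
    then (if y < 188 then 27 else (if y < 189 then 74 else 79)) else (if y < 191 then 12 else (if y
    < 192 then 27 else 14)))) else (if y < 198 then (if y < 195 then (if y < 194 then 21 else 41)
    else (if y < 196 then 30 else (if y < 197 then 6 else 20))) else (if y < 201 then (if y < 199
    then 86 else (if y < 200 then 83 else 87)) else (if y < 202 then 63 else (if y < 203 then 52
    else 29))))) else (if y < 215 then (if y < 209 then (if y < 206 then (if y < 205 then 75 else
    39) else (if y < 207 then 108 else (if y < 208 then 89 else 4))) else (if y < 212 then (if y <
    210 then 108 else (if y < 211 then 13 else 63)) else (if y < 213 then 10 else (if y < 214 then
    91 else 78)))) else (if y < 221 then (if y < 218 then (if y < 216 then 118 else (if y < 217 then
    93 else 58)) else (if y < 219 then 59 else (if y < 220 then 112 else 9))) else (if y < 224 then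
    (if y < 222 then 48 else (if y < 223 then 23 else 40)) else (if y < 225 then 57 else (if y < 226
    then 90 else 85)))))) else (if y < 250 then (if y < 238 then (if y < 232 then (if y < 229 then
    (if y < 228 then 88 else 83) else (if y < 230 then 28 else (if y < 231 then 58 else 94))) else
    (if y < 235 then (if y < 233 then 42 else (if y < 234 then 102 else 107)) else (if y < 236 then
    60 else (if y < 237 then 84 else 54)))) else (if y < 244 then (if y < 241 then (if y < 239 then
    69 else (if y < 240 then 50 else 95)) else (if y < 242 then 101 else (if y < 243 then 104 else
    34))) else (if y < 247 then (if y < 245 then 61 else (if y < 246 then 95 else 26)) else (if y <
    248 then 42 else (if y < 249 then 98 else 113))))) else (if y < 261 then (if y < 255 then (if y
    < 252 then (if y < 251 then 77 else 118) else (if y < 253 then 43 else (if y < 254 then 4 else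
    49))) else (if y < 258 then (if y < 256 then 47 else (if y < 257 then 51 else 40)) else (if y <
    259 then 92 else (if y < 260 then 96 else 1)))) else (if y < 267 then (if y < 264 then (if y <
    262 then 36 else (if y < 263 then 109 else 39)) else (if y < 265 then 88 else (if y < 266 then
    111 else 37))) else (if y < 270 then (if y < 268 then 120 else (if y < 269 then 7 else 64)) else
    (if y < 271 then 77 else (if y < 272 then 11 else 100))))))) else (if y < 318 then (if y < 295
    then (if y < 284 then (if y < 278 then (if y < 275 then (if y < 274 then 72 else 25) else (if y
    < 276 then 46 else (if y < 277 then 23 else 19))) else (if y < 281 then (if y < 279 then 2 else
    (if y < 280 then 65 else 31)) else (if y < 282 then 47 else (if y < 283 then 66 else 119))))
    else (if y < 289 then (if y < 286 then (if y < 285 then 48 else 110) else (if y < 287 then 33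
    else (if y < 288 then 24 else 82))) else (if y < 292 then (if y < 290 then 45 else (if y < 291
    then 82 else 104)) else (if y < 293 then 2 else (if y < 294 then 115 else 96))))) else (if y <
    306 then (if y < 300 then (if y < 297 then (if y < 296 then 107 else 50) else (if y < 298 then
    114 else (if y < 299 then 84 else 46))) else (if y < 303 then (if y < 301 then 64 else (if y <
    302 then 116 else 75)) else (if y < 304 then 12 else (if y < 305 then 21 else 55)))) else (if y
    < 312 then (if y < 309 then (if y < 307 then 25 else (if y < 308 then 90 else 14)) else (if y <
    310 then 7 else (if y < 311 then 110 else 10))) else (if y < 315 then (if y < 313 then 117 else
    (if y < 314 then 117 else 44)) else (if y < 316 then 80 else (if y < 317 then 20 else 97))))))
    else (if y < 341 then (if y < 329 then (if y < 323 then (if y < 320 then (if y < 319 then 100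
    else 70) else (if y < 321 then 60 else (if y < 322 then 115 else 109))) else (if y < 326 then
    (if y < 324 then 17 else (if y < 325 then 35 else 32)) else (if y < 327 then 33 else (if y < 328
    then 80 else 57)))) else (if y < 335 then (if y < 332 then (if y < 330 then 54 else (if y < 331
    then 41 else 94)) else (if y < 333 then 53 else (if y < 334 then 62 else 74))) else (if y < 338
    then (if y < 336 then 56 else (if y < 337 then 1 else 16)) else (if y < 339 then 97 else (if y <
    340 then 89 else 68))))) else (if y < 352 then (if y < 346 then (if y < 343 then (if y < 342
    then 79 else 17) else (if y < 344 then 56 else (if y < 345 then 106 else 59))) else (if y < 349
    then (if y < 347 then 5 else (if y < 348 then 44 else 15)) else (if y < 350 then 73 else (if y <
    351 then 101 else 6)))) else (if y < 358 then (if y < 355 then (if y < 353 then 92 else (if y <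
    354 then 99 else 18)) else (if y < 356 then 19 else (if y < 357 then 73 else 67))) else (if y <
    361 then (if y < 359 then 76 else (if y < 360 then 15 else 34)) else (if y < 362 then 114 else
    (if y < 363 then 65 else 86)))))))))"

lemma joining_spreads_check:
  "all_below 121 (block_labelled 0 joining_spread_0)"
  "all_below 121 (block_labelled 121 joining_spread_121)"
  "all_below 121 (block_labelled 122 joining_spread_122)"
  "all_below 121 (block_labelled 123 joining_spread_123)"
  by (simp_all add: all_below_numeral all_below_Suc all_below_0 block_labelled_def labelled_def
      line_index_def shift_def base_spread_def base_line_of_def joining_spread_0_def
      joining_spread_121_def joining_spread_122_def joining_spread_123_def)

lemma point_uniquely_joined: "r < 364 \<Longrightarrow> uniquely_joined r"
proof -
  assume "r < 364"
  then obtain m r0 where r0: "r0 \<in> {0, 121, 122, 123}" "r = shift m r0"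
    by (rule shift_orbit_representative)
  have "uniquely_joined r0"
    using r0(1) joining_spreads_check by (auto intro: uniquely_joined_if_labelled)
  then show "uniquely_joined r"
    using r0 uniquely_joined_shift by auto
qed

section \<open>Fields with three elements\<close>

definition pm_eq :: "'a::ab_group_add \<Rightarrow> 'a \<Rightarrow> bool" where
  "pm_eq x y \<longleftrightarrow> x = y \<or> x = - y"

lemma pm_eq_refl [simp]: "pm_eq x x"
  by (simp add: pm_eq_def)

lemma pm_eq_minus_right [simp]: "pm_eq x (- y) \<longleftrightarrow> pm_eq x y"
  by (auto simp: pm_eq_def)

lemma pm_eq_sym: "pm_eq x y \<Longrightarrow> pm_eq y x"
  by (auto simp: pm_eq_def)

lemma pm_eq_trans: "pm_eq x y \<Longrightarrow> pm_eq y z \<Longrightarrow> pm_eq x z"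
  by (auto simp: pm_eq_def)

lemma pm_eq_trans_iff: "pm_eq y z \<Longrightarrow> pm_eq x y \<longleftrightarrow> pm_eq x z"
  by (auto simp: pm_eq_def)

context
  assumes card_3: "CARD('a::field) = 3"
begin

lemma UNIV_card_3: "(UNIV :: 'a set) = {0, 1, -1}"
proof -
  have fin: "finite (UNIV :: 'a set)"
    using card_3 card.infinite by fastforce
  obtain x :: 'a where x: "x \<noteq> 0" "x \<noteq> 1"
  proof -
    have "\<not> (UNIV :: 'a set) \<subseteq> {0, 1}"
      using card_mono[of "{0 :: 'a, 1}" UNIV] card_3 by (auto simp: card_insert_if)
    then show ?thesis
      using that by blast
  qed
  have univ: "(UNIV :: 'a set) = {0, 1, x}"
    using x card_3 by (intro card_subset_eq[OF fin, symmetric]) auto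
  have "x + 1 \<in> {0, 1, x}"
    using univ by blast
  then have "x + 1 = 0"
    using x by auto
  then have "x = -1"
    by (rule eq_neg_iff_add_eq_0[THEN iffD2])
  then show ?thesis
    using univ by simp
qed

lemma one_neq_minus_one: "(1 :: 'a) \<noteq> -1"
proof
  assume h: "(1 :: 'a) = -1"
  have "(UNIV :: 'a set) = {0, 1}"
    using UNIV_card_3 unfolding h[symmetric] by simp
  then have "CARD('a) = card {0 :: 'a, 1}"
    by (rule arg_cong)
  then show False
    using card_3 by simp
qed

lemma two_eq_minus_one: "(2 :: 'a) = -1"
proof -
  have "(2 :: 'a) \<noteq> 0"
    using one_neq_minus_one by (metis eq_neg_iff_add_eq_0 one_add_one)
  moreover have "(2 :: 'a) \<noteq> 1"
    by (metis add_cancel_right_right one_add_one zero_neq_one)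
  moreover have "(2 :: 'a) \<in> {0, 1, -1}"
    using UNIV_card_3 by blast
  ultimately show ?thesis
    by blast
qed

lemma three_eq_zero: "(3 :: 'a) = 0"
proof -
  have "(3 :: 'a) = 2 + 1"
    by simp
  then show ?thesis
    by (simp add: two_eq_minus_one)
qed

lemma of_nat_mod_3: "(of_nat (n mod 3) :: 'a) = of_nat n"
proof -
  have "(of_nat n :: 'a) = of_nat (n mod 3) + 3 * of_nat (n div 3)"
    by (metis mod_div_mult_eq of_nat_add of_nat_mult of_nat_numeral mult.commute)
  then show ?thesis
    by (simp add: three_eq_zero)
qed

lemma of_nat_lt_3_inject: "m < 3 \<Longrightarrow> n < 3 \<Longrightarrow> (of_nat m :: 'a) = of_nat n \<longleftrightarrow> m = n"
proof -
  have "(of_nat k :: 'a) = [0, 1, -1] ! k" if "k < 3" for k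
    using that two_eq_minus_one by (auto simp: less_Suc_eq numeral_3_eq_3)
  moreover have "distinct [0 :: 'a, 1, -1]"
    using one_neq_minus_one by simp
  ultimately show "m < 3 \<Longrightarrow> n < 3 \<Longrightarrow> (of_nat m :: 'a) = of_nat n \<longleftrightarrow> m = n"
    by (metis distinct_conv_nth length_Cons list.size(3) numeral_3_eq_3)
qed

lemma minus_eq_self_iff: "- (x :: 'a^'n) = x \<longleftrightarrow> x = 0"
proof
  assume x: "- x = x"
  have "x $ i = 0" for i
  proof -
    have "- (x $ i) = x $ i"
      using x by (metis vector_uminus_component)
    then have "(1 + 1) * x $ i = 0"
      by (simp add: distrib_right)
    then show ?thesis
      using two_eq_minus_one by simp
  qed
  then show "x = 0"
    by (simp add: vec_eq_iff)
qed simp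

lemma scale_cases: "k *s (u :: 'a^'n) \<in> {0, u, - u}"
proof -
  have "k \<in> {0, 1, -1}"
    using UNIV_card_3 by blast
  then show ?thesis
    by (auto simp: vec_eq_iff)
qed

lemma span_pair_iff:
  "(w :: 'a^'n) \<in> vec.span {u, v} \<longleftrightarrow>
     w = 0 \<or> pm_eq w u \<or> pm_eq w v \<or> pm_eq w (u + v) \<or> pm_eq w (u - v)"
proof
  assume "w \<in> vec.span {u, v}"
  then obtain a b where "w - a *s u = b *s v"
    unfolding vec.span_insert[of u "{v}"] vec.span_singleton by auto
  then have w: "w = a *s u + b *s v"
    by (simp add: algebra_simps)
  show "w = 0 \<or> pm_eq w u \<or> pm_eq w v \<or> pm_eq w (u + v) \<or> pm_eq w (u - v)"
    using scale_cases[of a u] scale_cases[of b v]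
    unfolding w pm_eq_def by (auto simp: algebra_simps)
next
  have "u \<in> vec.span {u, v}" "v \<in> vec.span {u, v}"
    by (simp_all add: vec.span_base)
  then show "w = 0 \<or> pm_eq w u \<or> pm_eq w v \<or> pm_eq w (u + v) \<or> pm_eq w (u - v) \<Longrightarrow>
      w \<in> vec.span {u, v}"
    unfolding pm_eq_def by (auto intro: vec.span_zero vec.span_add vec.span_diff vec.span_neg)
qed

lemma independent_pair_iff:
  "vec.independent {u, v :: 'a^'n} \<and> u \<noteq> v \<longleftrightarrow> u \<noteq> 0 \<and> v \<noteq> 0 \<and> \<not> pm_eq u v"
proof -
  have "u \<in> vec.span {v} \<longleftrightarrow> u \<in> {0, v, - v}"
  proof
    assume "u \<in> vec.span {v}"
    then obtain k where "u = k *s v"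
      unfolding vec.span_singleton by auto
    then show "u \<in> {0, v, - v}"
      using scale_cases by simp
  qed (auto intro: vec.span_zero vec.span_base vec.span_neg)
  then show ?thesis
    by (auto simp: vec.independent_insert pm_eq_def)
qed

lemma code_vec_inject:
  assumes "is_code xs" "is_code ys"
  shows "(code_vec xs :: 'a^6) = code_vec ys \<longleftrightarrow> xs = ys"
proof
  assume eq: "(code_vec xs :: 'a^6) = code_vec ys"
  show "xs = ys"
  proof (rule nth_equalityI)
    show "length xs = length ys"
      using assms by (simp add: is_code_def)
  next
    fix k
    assume "k < length xs"
    then have k: "k < 6"
      using assms by (simp add: is_code_def)
    have "(of_nat (xs ! k) :: 'a) = of_nat (ys ! k)"
      using arg_cong[OF eq, of "\<lambda>v. v $ of_nat k"] k by (simp add: code_vec_def coord_index_of_nat)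
    moreover have "xs ! k < 3" "ys ! k < 3"
      using assms k by (simp_all add: is_code_def)
    ultimately show "xs ! k = ys ! k"
      using of_nat_lt_3_inject by blast
  qed
qed simp

lemma code_vec_add:
  "length xs = 6 \<Longrightarrow> length ys = 6 \<Longrightarrow>
     (code_vec xs :: 'a^6) + code_vec ys = code_vec (code_add xs ys)"
  by (simp add: vec_eq_iff code_vec_def code_add_def coord_index_lt of_nat_mod_3)

lemma code_vec_neg: "length xs = 6 \<Longrightarrow> - (code_vec xs :: 'a^6) = code_vec (code_neg xs)"
  by (simp add: vec_eq_iff code_vec_def code_neg_def coord_index_lt of_nat_mod_3
      two_eq_minus_one)

lemma singer_code_vec: "singer (code_vec xs :: 'a^6) = code_vec (singer_code xs)"
  unfolding vec_eq_iff
proof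
  fix i :: 6
  show "singer (code_vec xs :: 'a^6) $ i = code_vec (singer_code xs) $ i"
    using exhaust_6[of i]
    by (elim disjE) (simp_all add: singer_def singer_code_def code_vec_def coord_index_def
        of_nat_mod_3 two_eq_minus_one)
qed

lemma code_pm_eq_vec:
  "length ys = 6 \<Longrightarrow> code_pm_eq xs ys \<Longrightarrow> pm_eq (code_vec xs :: 'a^6) (code_vec ys)"
  by (auto simp: code_pm_eq_def pm_eq_def code_vec_neg)

lemma singer_pow_pm_eq: "pm_eq x y \<Longrightarrow> pm_eq ((singer ^^ n) x) ((singer ^^ n) y)"
  by (auto simp: pm_eq_def singer_pow_minus)

lemma singer_pow_axis_0:
  "(singer ^^ t) (axis 0 1) = (code_vec (singer_power_code (t mod 242)) :: 'a^6)"
proof (induction t)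
  case (Suc t)
  have "(singer ^^ Suc t) (axis 0 1) = (singer (code_vec (singer_power_code (t mod 242))) :: 'a^6)"
    using Suc by simp
  also have "\<dots> = code_vec (singer_power_code (Suc t mod 242))"
    using singer_power_code_Suc[of "t mod 242"] by (simp add: singer_code_vec mod_Suc_eq)
  finally show ?case .
qed (simp add: axis_0_code)

lemma singer_pow_axis_0_mod: "(singer ^^ (t mod 242)) (axis 0 1) = ((singer ^^ t) (axis 0 1) :: 'a^6)"
  by (simp add: singer_pow_axis_0)

lemma singer_pow_121_axis_0: "(singer ^^ 121) (axis 0 1) = - (axis 0 1 :: 'a^6)"
proof -
  have "singer_power_code 121 = code_neg (singer_power_code 0)"
    by (simp add: singer_power_code_def code_neg_def)
  then show ?thesis
    by (simp add: singer_pow_axis_0 code_vec_neg[symmetric] length_singer_power_code axis_0_code)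
qed

lemma singer_pow_add_121_axis_0:
  "(singer ^^ (t + 121)) (axis 0 1) = - ((singer ^^ t) (axis 0 1) :: 'a^6)"
  by (simp add: funpow_add singer_pow_121_axis_0 singer_pow_minus)

lemma singer_pow_axis_0_period:
  assumes "0 < d" "d < 242"
  shows "(singer ^^ d) (axis 0 1) \<noteq> (axis 0 1 :: 'a^6)"
proof
  assume "(singer ^^ d) (axis 0 1) = (axis 0 1 :: 'a^6)"
  moreover have "(singer ^^ 242) (axis 0 1) = (axis 0 1 :: 'a^6)"
    using singer_pow_axis_0_mod[of 242] by simp
  ultimately have period: "(singer ^^ gcd d 242) (axis 0 1) = (axis 0 1 :: 'a^6)"
    by (rule funpow_gcd_eq)
  have "gcd d 242 \<noteq> 242"
    using assms gcd_le1_nat[of d 242] by linarith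
  then have "gcd d 242 dvd 22 \<or> gcd d 242 dvd 121"
    by (intro dvd_242_cases) simp
  then show False
  proof
    assume "gcd d 242 dvd 22"
    then have "(singer ^^ 22) (axis 0 1) = (axis 0 1 :: 'a^6)"
      by (rule funpow_dvd_eq[OF period])
    moreover have "code_vec (singer_power_code 22) \<noteq> (code_vec (singer_power_code 0) :: 'a^6)"
      by (subst code_vec_inject) (simp_all add: singer_power_code_def is_code_def)
    ultimately show False
      by (simp add: singer_pow_axis_0 axis_0_code)
  next
    assume "gcd d 242 dvd 121"
    then have "(singer ^^ 121) (axis 0 1) = (axis 0 1 :: 'a^6)"
      by (rule funpow_dvd_eq[OF period])
    then show False
      by (simp add: singer_pow_121_axis_0 minus_eq_self_iff axis_eq_0_iff)
  qed
qed

lemma singer_pow_axis_0_inj: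
  assumes "s < 242" "t < 242" "(singer ^^ s) (axis 0 1) = ((singer ^^ t) (axis 0 1) :: 'a^6)"
  shows "s = t"
proof -
  have period: "(singer ^^ 242) (axis 0 1) = (axis 0 1 :: 'a^6)"
    using singer_pow_axis_0_mod[of 242] by simp
  have "\<not> t < s" if "s < 242" "(singer ^^ s) (axis 0 1) = ((singer ^^ t) (axis 0 1) :: 'a^6)"
    for s t
    using funpow_period_shift[OF period _ that(2)] that(1) singer_pow_axis_0_period[of "242 - s + t"]
    by fastforce
  then show ?thesis
    using assms by (metis linorder_neqE_nat)
qed

lemma singer_pow_axis_0_neq_0: "(singer ^^ t) (axis 0 1) \<noteq> (0 :: 'a^6)"
proof
  assume "(singer ^^ t) (axis 0 1) = (0 :: 'a^6)"
  then have "(singer ^^ (242 - t mod 242 + t mod 242)) (axis 0 1) = (0 :: 'a^6)"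
    by (simp only: funpow_add comp_apply singer_pow_axis_0_mod singer_pow_zero)
  then have "(singer ^^ 242) (axis 0 1) = (0 :: 'a^6)"
    by simp
  then show False
    using singer_pow_axis_0_mod[of 242] by (simp add: axis_eq_0_iff)
qed

lemma singer_pow_axis_0_mod_121:
  "pm_eq ((singer ^^ t) (axis 0 1)) ((singer ^^ (t mod 121)) (axis 0 1) :: 'a^6)"
proof -
  have mod: "t mod 121 = (t mod 242) mod 121"
    by (simp add: mod_mod_cancel)
  show ?thesis
  proof (cases "t mod 242 < 121")
    case True
    then show ?thesis
      using mod singer_pow_axis_0_mod[of t] by simp
  next
    case False
    then have "t mod 242 = t mod 121 + 121"
      using mod by (simp add: le_mod_geq)
    then show ?thesis
      using singer_pow_axis_0_mod[of t] singer_pow_add_121_axis_0[of "t mod 121"]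
      by (simp add: pm_eq_def)
  qed
qed

lemma point_vec_nth_5: "(point_vec c :: 'a^6) $ 5 = (if c < 121 then 0 else 1)"
  by (simp add: point_vec_def singer_pow_nth_5 axis_def)

lemma point_vec_neq_0: "(point_vec c :: 'a^6) \<noteq> 0"
proof (cases "c < 121")
  case True
  then show ?thesis
    using singer_pow_axis_0_neq_0 by (simp add: point_vec_def)
next
  case False
  then have "(point_vec c :: 'a^6) $ 5 = 1"
    by (simp add: point_vec_nth_5)
  then show ?thesis
    by auto
qed

lemma point_vec_code: "c < 364 \<Longrightarrow> (point_vec c :: 'a^6) = code_vec (point_code c)"
  by (simp add: point_vec_def point_code_def singer_pow_axis_0 axis_5_code[symmetric]
      code_vec_add length_singer_power_code)

lemma point_vec_inj_ge_121:
  assumes "121 \<le> c" "121 \<le> c'" "c < 364" "c' < 364" "(point_vec c :: 'a^6) = point_vec c'"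
  shows "c = c'"
proof -
  consider "c = 121" "c' = 121" | "c \<ge> 122" "c' = 121" | "c = 121" "c' \<ge> 122"
    | "c \<ge> 122" "c' \<ge> 122"
    using assms(1,2) by linarith
  then show ?thesis
  proof cases
    case 2
    then show ?thesis
      using assms(5) singer_pow_axis_0_neq_0[of "c - 122"] by (simp add: point_vec_def)
  next
    case 3
    then show ?thesis
      using assms(5) singer_pow_axis_0_neq_0[of "c' - 122"] by (simp add: point_vec_def)
  next
    case 4
    then have "(singer ^^ (c - 122)) (axis 0 1) = ((singer ^^ (c' - 122)) (axis 0 1) :: 'a^6)"
      using assms(5) by (simp add: point_vec_def)
    then have "c - 122 = c' - 122"
      using assms(3,4) by (intro singer_pow_axis_0_inj) simp_all
    then show ?thesis
      using 4 by simp
  qed simp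
qed

lemma point_vec_pm_eq_iff:
  assumes c: "c < 364" and c': "c' < 364"
  shows "pm_eq (point_vec c :: 'a^6) (point_vec c') \<longleftrightarrow> c = c'"
proof
  assume pm: "pm_eq (point_vec c :: 'a^6) (point_vec c')"
  then have nth_5: "(point_vec c :: 'a^6) $ 5 = point_vec c' $ 5 \<or>
      (point_vec c :: 'a^6) $ 5 = - (point_vec c' $ 5)"
    by (auto simp: pm_eq_def)
  consider "c < 121" "c' < 121" | "c < 121 \<longleftrightarrow> c' \<ge> 121" | "c \<ge> 121" "c' \<ge> 121"
    by linarith
  then show "c = c'"
  proof cases
    case 1
    have "(singer ^^ c) (axis 0 1) = ((singer ^^ c') (axis 0 1) :: 'a^6) \<or>
        (singer ^^ c) (axis 0 1) = ((singer ^^ (c' + 121)) (axis 0 1) :: 'a^6)"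
      using pm 1 by (simp add: pm_eq_def point_vec_def singer_pow_add_121_axis_0)
    then show ?thesis
      using 1 singer_pow_axis_0_inj[of c c'] singer_pow_axis_0_inj[of c "c' + 121"] by auto
  next
    case 2
    then show ?thesis
      using nth_5 one_neq_minus_one by (auto simp: point_vec_nth_5)
  next
    case 3
    then have "(point_vec c :: 'a^6) = point_vec c'"
      using pm one_neq_minus_one point_vec_nth_5[of c] point_vec_nth_5[of c']
      by (auto simp: pm_eq_def)
    then show ?thesis
      using 3 c c' point_vec_inj_ge_121 by blast
  qed
qed simp

lemma point_vec_cover:
  assumes "w \<noteq> 0"
  obtains c where "c < 364" "pm_eq w (point_vec c :: 'a^6)"
proof -
  define pair where "pair c = {point_vec c, - point_vec c :: 'a^6}" for c
  have "pair c \<inter> pair c' = {}" if "c < 364" "c' < 364" "c \<noteq> c'" for c c'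
    using point_vec_pm_eq_iff[OF that(1,2)] that(3)
    by (auto simp: pair_def pm_eq_def minus_equation_iff equation_minus_iff)
  then have "card (\<Union>c<364. pair c) = (\<Sum>c<364. card (pair c))"
    by (intro card_UN_disjoint) (auto simp: pair_def)
  also have "\<dots> = 728"
  proof -
    have "card (pair c) = 2" for c
      using point_vec_neq_0[of c] minus_eq_self_iff[of "point_vec c"]
      by (auto simp: pair_def card_insert_if)
    then show ?thesis
      by simp
  qed
  also have "\<dots> = card (UNIV - {0 :: 'a^6})"
    using card_3 by (simp add: card_Diff_singleton_if)
  finally have "(\<Union>c<364. pair c) = UNIV - {0}"
    using card_3 point_vec_neq_0
    by (intro card_subset_eq) (auto simp: pair_def card_ge_0_finite)
  then obtain c where "c < 364" "w \<in> pair c"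
    using assms by blast
  then show ?thesis
    using that by (auto simp: pair_def pm_eq_def)
qed

definition point_index :: "'a^6 \<Rightarrow> nat" where
  "point_index w = (THE c. c < 364 \<and> pm_eq w (point_vec c))"

lemma point_index_eq: "c < 364 \<Longrightarrow> pm_eq w (point_vec c) \<Longrightarrow> point_index w = c"
  unfolding point_index_def
  by (rule the_equality) (use point_vec_pm_eq_iff pm_eq_sym pm_eq_trans in blast)+

lemma point_index_lt: "w \<noteq> 0 \<Longrightarrow> point_index w < 364"
  using point_vec_cover point_index_eq by metis

lemma pm_eq_point_index: "w \<noteq> 0 \<Longrightarrow> pm_eq w (point_vec (point_index w))"
  using point_vec_cover point_index_eq by metis

lemma singer_pow_point_vec:
  assumes "c < 364"
  shows "pm_eq ((singer ^^ (2 * j)) (point_vec c)) (point_vec (shift j c) :: 'a^6)"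
proof -
  consider "c < 121" | "c = 121" | "c \<ge> 122"
    by linarith
  then show ?thesis
  proof cases
    case 1
    have "(singer ^^ (2 * j)) ((singer ^^ c) (axis 0 1)) = ((singer ^^ (2 * j + c)) (axis 0 1) :: 'a^6)"
      by (simp add: funpow_add)
    then have "(singer ^^ (2 * j)) (point_vec c) = ((singer ^^ (c + 2 * j)) (axis 0 1) :: 'a^6)"
      using 1 by (simp add: point_vec_def add.commute)
    then show ?thesis
      using 1 singer_pow_axis_0_mod_121[of "c + 2 * j"] by (simp add: point_vec_def shift_def)
  next
    case 3
    then have "(singer ^^ (2 * j)) (point_vec c) =
        (singer ^^ (2 * j)) ((singer ^^ (c - 122)) (axis 0 1)) + (axis 5 1 :: 'a^6)"
      by (simp add: point_vec_def singer_pow_add singer_pow_axis_5)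
    also have "(singer ^^ (2 * j)) ((singer ^^ (c - 122)) (axis 0 1)) =
        ((singer ^^ (2 * j + (c - 122))) (axis 0 1) :: 'a^6)"
      by (simp only: funpow_add comp_apply)
    also have "\<dots> = (singer ^^ ((2 * j + (c - 122)) mod 242)) (axis 0 1)"
      by (rule singer_pow_axis_0_mod[symmetric])
    finally show ?thesis
      using 3 by (simp add: point_vec_def shift_def add.commute)
  qed (simp add: point_vec_def shift_def singer_pow_axis_5)
qed

lemma base_line_sum_diff:
  assumes "i < 91" "base_spread ! i = [a, b, c, d]"
  shows "pm_eq (point_vec a + point_vec b) (point_vec c :: 'a^6)"
    and "pm_eq (point_vec a - point_vec b) (point_vec d :: 'a^6)"
proof -
  have lt: "a < 364" "b < 364" "c < 364" "d < 364"
    using base_spread_nth(3)[OF assms(1)] assms(2) by auto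
  have "is_line_quadruple [a, b, c, d]"
    using base_spread_quadruples assms by (metis list_all_length base_spread_check)
  then have quad: "code_pm_eq (code_add (point_code a) (point_code b)) (point_code c)"
      "code_pm_eq (code_add (point_code a) (code_neg (point_code b))) (point_code d)"
    by simp_all
  have "point_vec a + point_vec b = (code_vec (code_add (point_code a) (point_code b)) :: 'a^6)"
    using lt length_point_code by (simp add: point_vec_code code_vec_add)
  then show "pm_eq (point_vec a + point_vec b) (point_vec c :: 'a^6)"
    using code_pm_eq_vec[OF length_point_code quad(1)] lt by (simp add: point_vec_code)
  have "point_vec a - point_vec b =
      (code_vec (code_add (point_code a) (code_neg (point_code b))) :: 'a^6)"
    using lt length_point_code
    by (simp add: point_vec_code code_vec_neg code_vec_add[symmetric] code_neg_def)
  then show "pm_eq (point_vec a - point_vec b) (point_vec d :: 'a^6)"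
    using code_pm_eq_vec[OF length_point_code quad(2)] lt by (simp add: point_vec_code)
qed

definition spread_line :: "nat \<Rightarrow> nat \<Rightarrow> ('a^6) set" where
  "spread_line j i = vec.span ((singer ^^ (2 * j)) ` point_vec ` set (base_spread ! i))"

lemma spread_lineE:
  assumes "i < 91" "base_spread ! i = [a, b, c, d]"
  obtains u v :: "'a^6" where "spread_line j i = vec.span {u, v}"
    and "pm_eq u (point_vec (shift j a))" "pm_eq v (point_vec (shift j b))"
    and "pm_eq (u + v) (point_vec (shift j c))" "pm_eq (u - v) (point_vec (shift j d))"
proof -
  have lt: "a < 364" "b < 364" "c < 364" "d < 364"
    using base_spread_nth(3)[OF assms(1)] assms(2) by auto
  define u where "u = ((singer ^^ (2 * j)) (point_vec a) :: 'a^6)"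
  define v where "v = ((singer ^^ (2 * j)) (point_vec b) :: 'a^6)"
  have sum: "pm_eq ((singer ^^ (2 * j)) (point_vec c)) (u + v)"
    using singer_pow_pm_eq[OF pm_eq_sym[OF base_line_sum_diff(1)[OF assms]]]
    by (simp add: u_def v_def singer_pow_add)
  have diff: "pm_eq ((singer ^^ (2 * j)) (point_vec d)) (u - v)"
    using singer_pow_pm_eq[OF pm_eq_sym[OF base_line_sum_diff(2)[OF assms]]]
    by (simp add: u_def v_def singer_pow_diff)
  have "spread_line j i = vec.span {u, v}"
    unfolding spread_line_def assms(2) vec.span_eq
    using sum diff by (auto simp: u_def v_def span_pair_iff vec.span_base)
  moreover have "pm_eq u (point_vec (shift j a))" "pm_eq v (point_vec (shift j b))"
    using singer_pow_point_vec lt unfolding u_def v_def by blast+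
  moreover have "pm_eq (u + v) (point_vec (shift j c))" "pm_eq (u - v) (point_vec (shift j d))"
    using singer_pow_point_vec lt sum diff pm_eq_sym pm_eq_trans by blast+
  ultimately show ?thesis
    using that by blast
qed

lemma point_index_mem_block_iff:
  assumes "i < 91" "w \<noteq> 0"
  shows "point_index w \<in> block j i \<longleftrightarrow>
    (\<exists>x\<in>set (base_spread ! i). pm_eq w (point_vec (shift j x)))"
proof
  assume "point_index w \<in> block j i"
  then obtain x where "x \<in> set (base_spread ! i)" "point_index w = shift j x"
    by (auto simp: block_def)
  then show "\<exists>x\<in>set (base_spread ! i). pm_eq w (point_vec (shift j x))"
    using pm_eq_point_index[OF assms(2)] by metis
next
  assume "\<exists>x\<in>set (base_spread ! i). pm_eq w (point_vec (shift j x))"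
  then obtain x where x: "x \<in> set (base_spread ! i)" "pm_eq w (point_vec (shift j x))"
    by blast
  then have "point_index w = shift j x"
    using point_index_eq shift_lt base_spread_nth(3)[OF assms(1)] by blast
  then show "point_index w \<in> block j i"
    using x(1) by (simp add: block_def)
qed

lemma mem_spread_line_iff:
  assumes "i < 91" "(w :: 'a^6) \<noteq> 0"
  shows "w \<in> spread_line j i \<longleftrightarrow> point_index w \<in> block j i"
proof -
  obtain a b c d where abcd: "base_spread ! i = [a, b, c, d]"
    using base_spread_nthE[OF assms(1)] .
  obtain u v where span: "spread_line j i = vec.span {u, v}"
    and u: "pm_eq u (point_vec (shift j a))" and v: "pm_eq v (point_vec (shift j b))"
    and sum: "pm_eq (u + v) (point_vec (shift j c))" and diff: "pm_eq (u - v) (point_vec (shift j d))"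
    using spread_lineE[OF assms(1) abcd] .
  have "w \<in> spread_line j i \<longleftrightarrow> (\<exists>x\<in>set (base_spread ! i). pm_eq w (point_vec (shift j x)))"
    unfolding span span_pair_iff abcd using assms(2)
    by (simp add: pm_eq_trans_iff[OF u] pm_eq_trans_iff[OF v] pm_eq_trans_iff[OF sum]
        pm_eq_trans_iff[OF diff])
  then show ?thesis
    using point_index_mem_block_iff[OF assms] by simp
qed

lemma spread_line_in_pg_lines:
  assumes "i < 91"
  shows "spread_line j i \<in> pg_lines"
proof -
  obtain a b c d where abcd: "base_spread ! i = [a, b, c, d]"
    using base_spread_nthE[OF assms] .
  obtain u v where span: "spread_line j i = vec.span {u, v}"
    and u: "pm_eq u (point_vec (shift j a))" and v: "pm_eq v (point_vec (shift j b))"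
    using spread_lineE[OF assms abcd] .
  have lt: "a < 364" "b < 364"
    using base_spread_nth(3)[OF assms] abcd by auto
  have "shift j a \<noteq> shift j b"
    using shift_inj lt base_spread_nth(2)[OF assms] abcd by auto
  have "\<not> pm_eq u v"
  proof
    assume "pm_eq u v"
    then have "pm_eq (point_vec (shift j b)) (point_vec (shift j a) :: 'a^6)"
      using pm_eq_trans_iff[OF v] pm_eq_trans_iff[OF u] pm_eq_sym by metis
    then show False
      using \<open>shift j a \<noteq> shift j b\<close> point_vec_pm_eq_iff shift_lt lt by simp
  qed
  moreover have "u \<noteq> 0" "v \<noteq> 0"
    using u v point_vec_neq_0 by (auto simp: pm_eq_def)
  ultimately show ?thesis
    using span span_pair_in_pg_lines independent_pair_iff by metis
qed

lemma pg_line_two_points: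
  assumes "(L :: ('a^6) set) \<in> pg_lines"
  obtains u v where "u \<in> L" "v \<in> L" "u \<noteq> 0" "v \<noteq> 0" "point_index u \<noteq> point_index v"
    and "L = vec.span {u, v}"
proof -
  obtain u v where uv: "vec.independent {u, v}" "u \<noteq> v" "L = vec.span {u, v}"
    using pg_lineE[OF assms] by blast
  then have "u \<noteq> 0" "v \<noteq> 0" "\<not> pm_eq u v"
    using independent_pair_iff by blast+
  moreover have "point_index u \<noteq> point_index v"
    using point_index_lt pm_eq_point_index calculation pm_eq_sym pm_eq_trans by metis
  ultimately show ?thesis
    using that uv(3) vec.span_base by (metis insertCI)
qed

section \<open>The parallelism\<close>

definition spread :: "nat \<Rightarrow> ('a^6) set set" where
  "spread j = spread_line j ` {..<91}"

definition parallelism :: "('a^6) set set set" where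
  "parallelism = spread ` {..<121}"

lemma spread_is_spread: "is_spread (spread j)"
  unfolding is_spread_def
proof (intro conjI ballI)
  show "spread j \<subseteq> pg_lines"
    using spread_line_in_pg_lines by (auto simp: spread_def)
next
  fix P :: "('a^6) set"
  assume "P \<in> pg_points"
  then obtain w where w: "w \<noteq> 0" "P = vec.span {w}"
    by (rule pg_pointE)
  define i where "i = line_index j (point_index w)"
  have i: "i < 91" "point_index w \<in> block j i"
    using point_index_lt[OF w(1)] mem_block_iff line_index_lt unfolding i_def by auto
  have sub_iff: "P \<subseteq> spread_line j i' \<longleftrightarrow> point_index w \<in> block j i'" if "i' < 91" for i'
    using w mem_spread_line_iff[OF that w(1)] span_singleton_subset_iff vec.subspace_span
    unfolding spread_line_def by metis
  show "\<exists>!L. L \<in> spread j \<and> P \<subseteq> L"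
  proof (rule ex1I)
    show "spread_line j i \<in> spread j \<and> P \<subseteq> spread_line j i"
      using i sub_iff by (simp add: spread_def)
  next
    fix L :: "('a^6) set"
    assume "L \<in> spread j \<and> P \<subseteq> L"
    then obtain i' where "i' < 91" "L = spread_line j i'" "point_index w \<in> block j i'"
      using sub_iff by (auto simp: spread_def)
    then show "L = spread_line j i"
      using point_index_lt[OF w(1)] mem_block_iff unfolding i_def by auto
  qed
qed

lemma spread_line_unique_spread:
  assumes "j < 121" "k < 121" "i < 91" "i' < 91" "spread_line j i = spread_line k i'"
  shows "j = k"
proof -
  obtain u v where uv: "u \<in> spread_line j i" "v \<in> spread_line j i" "u \<noteq> 0" "v \<noteq> 0"
    and ne: "point_index u \<noteq> point_index v"
    using pg_line_two_points[OF spread_line_in_pg_lines[OF assms(3)]] by metis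
  define x where "x = point_index u"
  have x: "x < 364"
    using point_index_lt[OF uv(3)] by (simp add: x_def)
  have "point_index v \<in> block_through j x" "point_index v \<in> block_through k x"
    using uv assms mem_spread_line_iff mem_block_iff x unfolding block_through_def x_def
    by metis+
  moreover have "point_index v < 364" "point_index v \<noteq> x"
    using point_index_lt[OF uv(4)] ne by (simp_all add: x_def)
  ultimately show ?thesis
    using point_uniquely_joined[OF x] assms(1,2) unfolding uniquely_joined_def by blast
qed

lemma pg_line_in_spread: "(L :: ('a^6) set) \<in> pg_lines \<Longrightarrow> \<exists>j<121. \<exists>i<91. L = spread_line j i"
proof -
  assume L: "L \<in> pg_lines"
  obtain u v where uv: "u \<noteq> 0" "v \<noteq> 0" "point_index u \<noteq> point_index v" "L = vec.span {u, v}"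
    using pg_line_two_points[OF L] by metis
  define x where "x = point_index u"
  have x: "x < 364"
    using point_index_lt[OF uv(1)] by (simp add: x_def)
  obtain j where j: "j < 121" "point_index v \<in> block_through j x"
    using point_uniquely_joined[OF x] point_index_lt[OF uv(2)] uv(3)
    unfolding uniquely_joined_def x_def by metis
  define i where "i = line_index j x"
  have i: "i < 91"
    using x by (simp add: i_def line_index_lt)
  have "u \<in> spread_line j i" "v \<in> spread_line j i"
    using mem_spread_line_iff[OF i] uv mem_block_through[OF x] j(2)
    unfolding block_through_def i_def x_def by auto
  then have "L \<subseteq> spread_line j i"
    unfolding uv(4) spread_line_def by (intro vec.span_minimal) (auto simp: vec.subspace_span)
  then show "\<exists>j<121. \<exists>i<91. L = spread_line j i"
    using j(1) i pg_lines_subset_imp_eq[OF L spread_line_in_pg_lines[OF i]] by blast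
qed

lemma is_parallelism_parallelism: "is_parallelism parallelism"
  unfolding is_parallelism_def
proof (intro conjI ballI)
  fix L :: "('a^6) set"
  assume "L \<in> pg_lines"
  then obtain j i where ji: "j < 121" "i < 91" "L = spread_line j i"
    using pg_line_in_spread by blast
  show "\<exists>!S. S \<in> parallelism \<and> L \<in> S"
  proof (rule ex1I)
    show "spread j \<in> parallelism \<and> L \<in> spread j"
      using ji by (simp add: parallelism_def spread_def)
  next
    fix S :: "('a^6) set set"
    assume "S \<in> parallelism \<and> L \<in> S"
    then obtain k i' where "k < 121" "i' < 91" "S = spread k" "L = spread_line k i'"
      by (auto simp: parallelism_def spread_def)
    then show "S = spread j"
      using spread_line_unique_spread ji by metis
  qed
qed (auto simp: parallelism_def spread_is_spread)

lemma card_spread: "card (spread j) = 91"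
proof -
  have "inj_on (spread_line j) {..<91}"
  proof (rule inj_onI)
    fix i i'
    assume i: "i \<in> {..<91}" "i' \<in> {..<91}" and eq: "spread_line j i = spread_line j i'"
    obtain u where "u \<in> spread_line j i" "u \<noteq> 0"
      using pg_line_two_points[OF spread_line_in_pg_lines] i by (metis lessThan_iff)
    then show "i = i'"
      using i eq mem_spread_line_iff mem_block_iff point_index_lt by (metis lessThan_iff)
  qed
  then show ?thesis
    by (simp add: spread_def card_image)
qed

lemma card_mem_parallelism: "S \<in> parallelism \<Longrightarrow> card S = 91"
  using card_spread by (auto simp: parallelism_def)

lemma card_parallelism: "card parallelism = 121"
proof -
  have "inj_on spread {..<121}"
  proof (rule inj_onI)
    fix j k
    assume jk: "j \<in> {..<121}" "k \<in> {..<121}" and "spread j = spread k"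
    have "spread_line j 0 \<in> spread j"
      by (simp add: spread_def)
    then have "spread_line j 0 \<in> spread k"
      using \<open>spread j = spread k\<close> by simp
    then obtain i' where "i' < 91" "spread_line j 0 = spread_line k i'"
      by (auto simp: spread_def)
    then show "j = k"
      using jk spread_line_unique_spread[of j k 0 i'] by simp
  qed
  then show ?thesis
    by (simp add: parallelism_def card_image)
qed

end

theorem mainTheorem1:
  assumes "CARD('a::field) = 3"
  shows "\<exists>\<P> :: ('a ^ 6) set set set. is_parallelism \<P> \<and> card \<P> = 121 \<and>
           (\<forall>S\<in>\<P>. card S = 91)"
proof (intro exI conjI)
  show "is_parallelism (parallelism :: ('a ^ 6) set set set)"
    using is_parallelism_parallelism[OF assms] .
  show "card (parallelism :: ('a ^ 6) set set set) = 121"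
    using card_parallelism[OF assms] .
  show "\<forall>S\<in>(parallelism :: ('a ^ 6) set set set). card S = 91"
    using card_mem_parallelism[OF assms] by blast
qed

end
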